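(* For every $\lambda$-calculus value $V$ and variable $x$, writing $I=\lambda z.z$: $\mathcal V'[\![I(xV)]\!]\not\cong_\pi \mathcal V'[\![xV]\!]$ and $\mathcal V[\![I(xV)]\!]\not\cong_\pi\mathcal V[\![xV]\!]$, where $\mathcal V,\mathcal V'$ are Milner's two call-by-value encodings into the $\pi$-calculus and $\cong_\pi$ is barbed congruence in the $\pi$-calculus.
   Context: $\lambda$-terms (possibly open): $M::=x\mid\lambda x.M\mid MM$; values $V::=x\mid\lambda x.M$. $\pi$-calculus: polyadic, well-sorted, with processes $P ::= 0\mid a(\tilde b).P\mid\overline a\langle\tilde b\rangle.P\mid(\nu a)P\mid P|P\mid\ !a(\tilde b).P\mid F\langle\tilde a\rangle$ and abstractions $F::=(\tilde a)P\mid K$ (constants $K\triangleq(\tilde x)P$, $P$ name-closed); $\overline a(y).P$ abbreviates $(\nu y)\overline a\langle y\rangle.P$. Standard operational semantics; $P\Longrightarrow P'$ is a sequence of internal steps, $P\Downarrow_a$ means $P\Longrightarrow P'$ with $P'$ able to perform an output with subject $a$. Barbed bisimilarity $\dot\approx$ is the largest symmetric relation such that $P\dot\approx Q$ implies: $P\Longrightarrow P'$ implies $Q\Longrightarrow Q'$ with $P'\dot\approx Q'$, and $P\Downarrow_a$ iff $Q\Downarrow_a$. Agents $A,B$ are barbed congruent, $A\cong_\pi B$, if $C[A]\dot\approx C[B]$ for all well-sorted $\pi$-contexts $C$. Encodings ($\lambda$-variables are names). $\mathcal V$: $\mathcal V[\![\lambda x.M]\!]=(p)\,\overline p(y).\,!y(x,q).\mathcal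 V[\![M]\!]\langle q\rangle$; $\mathcal V[\![MN]\!]=(p)(\nu q)\big(\mathcal V[\![M]\!]\langle q\rangle\mid q(y).(\nu r)(\mathcal V[\![N]\!]\langle r\rangle\mid r(w).\overline y\langle w,p\rangle)\big)$; $\mathcal V[\![x]\!]=(p)\,\overline p\langle x\rangle$. $\mathcal V'$ is defined by the same clauses for abstraction and application (with $\mathcal V'$ in place of $\mathcal V$), and $\mathcal V'[\![x]\!]=(p)\,\overline p(y).\,!y(z,q).\overline x\langle z,q\rangle$. *)

theory Defs
  imports Main
begin

section \<open>Polyadic, well-sorted pi-calculus\<close>

text \<open>Names carry their sort: a name is a pair (sort, index), so every sort has
infinitely many names.  A sorting is a function ob assigning to each subject
sort the list of object sorts.\<close>

type_synonym 's name = "'s \<times> nat"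

datatype ('s,'k) proc =
    PNil
  | PIn "'s name" "'s name list" "('s,'k) proc"
  | POut "'s name" "'s name list" "('s,'k) proc"
  | PRes "'s name" "('s,'k) proc"
  | PPar "('s,'k) proc" "('s,'k) proc"
  | PRep "'s name" "'s name list" "('s,'k) proc"
  | PApp "('s,'k) pabs" "'s name list"
  | Hole "'s name list"
and ('s,'k) pabs =
    Abs "'s name list" "('s,'k) proc"
  | Const 'k

type_synonym ('s,'k) defs = "'k \<Rightarrow> ('s name list \<times> ('s,'k) proc)"

primrec fn :: "('s,'k) proc \<Rightarrow> 's name set"
  and fna :: "('s,'k) pabs \<Rightarrow> 's name set" where
  "fn PNil = {}"
| "fn (PIn a bs P) = insert a (fn P - set bs)"
| "fn (POut a bs P) = insert a (set bs \<union> fn P)"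
| "fn (PRes a P) = fn P - {a}"
| "fn (PPar P Q) = fn P \<union> fn Q"
| "fn (PRep a bs P) = insert a (fn P - set bs)"
| "fn (PApp F as) = fna F \<union> set as"
| "fn (Hole as) = set as"
| "fna (Abs xs P) = fn P - set xs"
| "fna (Const k) = {}"

definition fresh_idx :: "'s name set \<Rightarrow> nat" where
  "fresh_idx S = Suc (Max (insert 0 (snd ` S)))"

definition fresh_list :: "nat \<Rightarrow> 's name list \<Rightarrow> 's name list" where
  "fresh_list N bs = map (\<lambda>i. (fst (bs ! i), N + i)) [0..<length bs]"

definition upds :: "('a \<Rightarrow> 'a) \<Rightarrow> 'a list \<Rightarrow> 'a list \<Rightarrow> 'a \<Rightarrow> 'a" where
  "upds \<sigma> xs ys = foldl (\<lambda>f (x,y). f(x := y)) \<sigma> (zip xs ys)"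

primrec subst :: "('s name \<Rightarrow> 's name) \<Rightarrow> ('s,'k) proc \<Rightarrow> ('s,'k) proc"
  and substa :: "('s name \<Rightarrow> 's name) \<Rightarrow> ('s,'k) pabs \<Rightarrow> ('s,'k) pabs" where
  "subst \<sigma> PNil = PNil"
| "subst \<sigma> (PIn a bs P) =
     (let bs' = fresh_list (fresh_idx (\<sigma> ` (fn P - set bs))) bs
      in PIn (\<sigma> a) bs' (subst (upds \<sigma> bs bs') P))"
| "subst \<sigma> (POut a bs P) = POut (\<sigma> a) (map \<sigma> bs) (subst \<sigma> P)"
| "subst \<sigma> (PRes a P) =
     (let a' = (fst a, fresh_idx (\<sigma> ` (fn P - {a})))
      in PRes a' (subst (\<sigma>(a := a')) P))"
| "subst \<sigma> (PPar P Q) = PPar (subst \<sigma> P) (subst \<sigma> Q)"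
| "subst \<sigma> (PRep a bs P) =
     (let bs' = fresh_list (fresh_idx (\<sigma> ` (fn P - set bs))) bs
      in PRep (\<sigma> a) bs' (subst (upds \<sigma> bs bs') P))"
| "subst \<sigma> (PApp F as) = PApp (substa \<sigma> F) (map \<sigma> as)"
| "subst \<sigma> (Hole as) = Hole (map \<sigma> as)"
| "substa \<sigma> (Abs xs P) =
     (let xs' = fresh_list (fresh_idx (\<sigma> ` (fn P - set xs))) xs
      in Abs xs' (subst (upds \<sigma> xs xs') P))"
| "substa \<sigma> (Const k) = Const k"

inductive sc :: "('s,'k) defs \<Rightarrow> ('s,'k) proc \<Rightarrow> ('s,'k) proc \<Rightarrow> bool" for \<Delta> where
  sc_refl: "sc \<Delta> P P"
| sc_sym: "sc \<Delta> P Q \<Longrightarrow> sc \<Delta> Q P"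
| sc_trans: "sc \<Delta> P Q \<Longrightarrow> sc \<Delta> Q R \<Longrightarrow> sc \<Delta> P R"
| sc_in: "sc \<Delta> P Q \<Longrightarrow> sc \<Delta> (PIn a bs P) (PIn a bs Q)"
| sc_out: "sc \<Delta> P Q \<Longrightarrow> sc \<Delta> (POut a bs P) (POut a bs Q)"
| sc_res: "sc \<Delta> P Q \<Longrightarrow> sc \<Delta> (PRes a P) (PRes a Q)"
| sc_par: "sc \<Delta> P Q \<Longrightarrow> sc \<Delta> (PPar P R) (PPar Q R)"
| sc_rep: "sc \<Delta> P Q \<Longrightarrow> sc \<Delta> (PRep a bs P) (PRep a bs Q)"
| sc_app: "sc \<Delta> P Q \<Longrightarrow> sc \<Delta> (PApp (Abs xs P) as) (PApp (Abs xs Q) as)"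
| sc_par_nil: "sc \<Delta> (PPar P PNil) P"
| sc_par_comm: "sc \<Delta> (PPar P Q) (PPar Q P)"
| sc_par_assoc: "sc \<Delta> (PPar (PPar P Q) R) (PPar P (PPar Q R))"
| sc_res_nil: "sc \<Delta> (PRes a PNil) PNil"
| sc_res_comm: "sc \<Delta> (PRes a (PRes b P)) (PRes b (PRes a P))"
| sc_res_par: "a \<notin> fn P \<Longrightarrow> sc \<Delta> (PPar P (PRes a Q)) (PRes a (PPar P Q))"
| sc_rep_unfold: "sc \<Delta> (PRep a bs P) (PPar (PIn a bs P) (PRep a bs P))"
| sc_beta: "length xs = length as \<Longrightarrow> sc \<Delta> (PApp (Abs xs P) as) (subst (upds id xs as) P)"
| sc_const: "\<Delta> k = (xs, P) \<Longrightarrow> length xs = length as \<Longrightarrow>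
             sc \<Delta> (PApp (Const k) as) (subst (upds id xs as) P)"
| sc_alpha_res: "b \<notin> fn (PRes a P) \<Longrightarrow> fst b = fst a \<Longrightarrow>
             sc \<Delta> (PRes a P) (PRes b (subst (id(a := b)) P))"
| sc_alpha_in: "distinct bs' \<Longrightarrow> map fst bs' = map fst bs \<Longrightarrow> set bs' \<inter> fn (PIn a bs P) = {} \<Longrightarrow>
             sc \<Delta> (PIn a bs P) (PIn a bs' (subst (upds id bs bs') P))"
| sc_alpha_rep: "distinct bs' \<Longrightarrow> map fst bs' = map fst bs \<Longrightarrow> set bs' \<inter> fn (PRep a bs P) = {} \<Longrightarrow>
             sc \<Delta> (PRep a bs P) (PRep a bs' (subst (upds id bs bs') P))"

inductive red :: "('s,'k) defs \<Rightarrow> ('s,'k) proc \<Rightarrow> ('s,'k) proc \<Rightarrow> bool" for \<Delta> where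
  red_comm: "length bs = length cs \<Longrightarrow>
     red \<Delta> (PPar (PIn a bs P) (POut a cs Q)) (PPar (subst (upds id bs cs) P) Q)"
| red_par: "red \<Delta> P P' \<Longrightarrow> red \<Delta> (PPar P Q) (PPar P' Q)"
| red_res: "red \<Delta> P P' \<Longrightarrow> red \<Delta> (PRes a P) (PRes a P')"
| red_struct: "sc \<Delta> P P' \<Longrightarrow> red \<Delta> P' Q' \<Longrightarrow> sc \<Delta> Q' Q \<Longrightarrow> red \<Delta> P Q"

primrec obs :: "'s name \<Rightarrow> ('s,'k) proc \<Rightarrow> bool" where
  "obs a PNil = False"
| "obs a (PIn b bs P) = False"
| "obs a (POut b bs P) = (a = b)"
| "obs a (PRes b P) = (a \<noteq> b \<and> obs a P)"
| "obs a (PPar P Q) = (obs a P \<or> obs a Q)"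
| "obs a (PRep b bs P) = False"
| "obs a (PApp F as) = False"
| "obs a (Hole as) = False"

definition barb :: "('s,'k) defs \<Rightarrow> ('s,'k) proc \<Rightarrow> 's name \<Rightarrow> bool" where
  "barb \<Delta> P a \<longleftrightarrow> (\<exists>P'. sc \<Delta> P P' \<and> obs a P')"

definition wbarb :: "('s,'k) defs \<Rightarrow> ('s,'k) proc \<Rightarrow> 's name \<Rightarrow> bool" where
  "wbarb \<Delta> P a \<longleftrightarrow> (\<exists>P'. (red \<Delta>)\<^sup>*\<^sup>* P P' \<and> barb \<Delta> P' a)"

definition is_bbisim :: "('s,'k) defs \<Rightarrow> (('s,'k) proc \<Rightarrow> ('s,'k) proc \<Rightarrow> bool) \<Rightarrow> bool" where
  "is_bbisim \<Delta> R \<longleftrightarrow> symp R \<and>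
     (\<forall>P Q. R P Q \<longrightarrow>
        (\<forall>P'. (red \<Delta>)\<^sup>*\<^sup>* P P' \<longrightarrow> (\<exists>Q'. (red \<Delta>)\<^sup>*\<^sup>* Q Q' \<and> R P' Q')) \<and>
        (\<forall>a. wbarb \<Delta> P a \<longleftrightarrow> wbarb \<Delta> Q a))"

definition bbisimilar :: "('s,'k) defs \<Rightarrow> ('s,'k) proc \<Rightarrow> ('s,'k) proc \<Rightarrow> bool" where
  "bbisimilar \<Delta> P Q \<longleftrightarrow> (\<exists>R. is_bbisim \<Delta> R \<and> R P Q)"

primrec asort :: "('s,'k) defs \<Rightarrow> ('s,'k) pabs \<Rightarrow> 's list" where
  "asort \<Delta> (Abs xs P) = map fst xs"
| "asort \<Delta> (Const k) = map fst (fst (\<Delta> k))"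

text \<open>Well-sortedness w.r.t. sorting ob; hs is the sort of the abstraction the
hole (if any) is to be filled with.\<close>
primrec ws :: "('s \<Rightarrow> 's list) \<Rightarrow> ('s,'k) defs \<Rightarrow> 's list \<Rightarrow> ('s,'k) proc \<Rightarrow> bool"
  and wsa :: "('s \<Rightarrow> 's list) \<Rightarrow> ('s,'k) defs \<Rightarrow> 's list \<Rightarrow> ('s,'k) pabs \<Rightarrow> bool" where
  "ws ob \<Delta> hs PNil = True"
| "ws ob \<Delta> hs (PIn a bs P) = (map fst bs = ob (fst a) \<and> distinct bs \<and> ws ob \<Delta> hs P)"
| "ws ob \<Delta> hs (POut a bs P) = (map fst bs = ob (fst a) \<and> ws ob \<Delta> hs P)"
| "ws ob \<Delta> hs (PRes a P) = ws ob \<Delta> hs P"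
| "ws ob \<Delta> hs (PPar P Q) = (ws ob \<Delta> hs P \<and> ws ob \<Delta> hs Q)"
| "ws ob \<Delta> hs (PRep a bs P) = (map fst bs = ob (fst a) \<and> distinct bs \<and> ws ob \<Delta> hs P)"
| "ws ob \<Delta> hs (PApp F as) = (wsa ob \<Delta> hs F \<and> map fst as = asort \<Delta> F)"
| "ws ob \<Delta> hs (Hole as) = (map fst as = hs)"
| "wsa ob \<Delta> hs (Abs xs P) = (distinct xs \<and> ws ob \<Delta> hs P)"
| "wsa ob \<Delta> hs (Const k) = True"

primrec nholes :: "('s,'k) proc \<Rightarrow> nat" and nholesa :: "('s,'k) pabs \<Rightarrow> nat" where
  "nholes PNil = 0"
| "nholes (PIn a bs P) = nholes P"
| "nholes (POut a bs P) = nholes P"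
| "nholes (PRes a P) = nholes P"
| "nholes (PPar P Q) = nholes P + nholes Q"
| "nholes (PRep a bs P) = nholes P"
| "nholes (PApp F as) = nholesa F"
| "nholes (Hole as) = 1"
| "nholesa (Abs xs P) = nholes P"
| "nholesa (Const k) = 0"

text \<open>Filling the hole of a context with an abstraction (names may be captured).\<close>
primrec fill :: "('s,'k) proc \<Rightarrow> ('s,'k) pabs \<Rightarrow> ('s,'k) proc"
  and filla :: "('s,'k) pabs \<Rightarrow> ('s,'k) pabs \<Rightarrow> ('s,'k) pabs" where
  "fill PNil A = PNil"
| "fill (PIn a bs P) A = PIn a bs (fill P A)"
| "fill (POut a bs P) A = POut a bs (fill P A)"
| "fill (PRes a P) A = PRes a (fill P A)"
| "fill (PPar P Q) A = PPar (fill P A) (fill Q A)"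
| "fill (PRep a bs P) A = PRep a bs (fill P A)"
| "fill (PApp F as) A = PApp (filla F A) as"
| "fill (Hole as) A = PApp A as"
| "filla (Abs xs P) A = Abs xs (fill P A)"
| "filla (Const k) A = Const k"

definition wf_defs :: "('s \<Rightarrow> 's list) \<Rightarrow> ('s,'k) defs \<Rightarrow> bool" where
  "wf_defs ob \<Delta> \<longleftrightarrow> (\<forall>k. distinct (fst (\<Delta> k)) \<and> ws ob \<Delta> [] (snd (\<Delta> k)) \<and>
      nholes (snd (\<Delta> k)) = 0 \<and> fn (snd (\<Delta> k)) \<subseteq> set (fst (\<Delta> k)))"

definition bcong :: "('s \<Rightarrow> 's list) \<Rightarrow> ('s,'k) defs \<Rightarrow> ('s,'k) pabs \<Rightarrow> ('s,'k) pabs \<Rightarrow> bool" where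
  "bcong ob \<Delta> A B \<longleftrightarrow>
     (\<forall>C. ws ob \<Delta> (asort \<Delta> A) C \<and> nholes C = 1 \<longrightarrow> bbisimilar \<Delta> (fill C A) (fill C B))"

section \<open>Lambda-calculus and Milner's call-by-value encodings\<close>

datatype lterm = Var nat | Lam nat lterm | LApp lterm lterm

fun is_value :: "lterm \<Rightarrow> bool" where
  "is_value (Var x) = True"
| "is_value (Lam x M) = True"
| "is_value (LApp M N) = False"

text \<open>v is the sort of values / lambda-variables, c the sort of continuation names.
Lambda-variable n is the pi-name (v, 2n); the auxiliary names of the encodings
use other indices, hence never capture lambda-variables.\<close>
definition lvar :: "'s \<Rightarrow> nat \<Rightarrow> 's name" where "lvar v n = (v, 2 * n)"

primrec encV :: "'s \<Rightarrow> 's \<Rightarrow> lterm \<Rightarrow> ('s,'k) pabs" where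
  "encV v c (Var n) = Abs [(c,0)] (POut (c,0) [lvar v n] PNil)"
| "encV v c (Lam n M) = Abs [(c,0)]
     (PRes (v,1) (POut (c,0) [(v,1)] (PRep (v,1) [lvar v n, (c,1)] (PApp (encV v c M) [(c,1)]))))"
| "encV v c (LApp M N) = Abs [(c,0)]
     (PRes (c,1) (PPar (PApp (encV v c M) [(c,1)])
        (PIn (c,1) [(v,1)] (PRes (c,2) (PPar (PApp (encV v c N) [(c,2)])
            (PIn (c,2) [(v,3)] (POut (v,1) [(v,3), (c,0)] PNil)))))))"

primrec encV' :: "'s \<Rightarrow> 's \<Rightarrow> lterm \<Rightarrow> ('s,'k) pabs" where
  "encV' v c (Var n) = Abs [(c,0)]
     (PRes (v,1) (POut (c,0) [(v,1)] (PRep (v,1) [(v,5), (c,1)] (POut (lvar v n) [(v,5), (c,1)] PNil))))"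
| "encV' v c (Lam n M) = Abs [(c,0)]
     (PRes (v,1) (POut (c,0) [(v,1)] (PRep (v,1) [lvar v n, (c,1)] (PApp (encV' v c M) [(c,1)]))))"
| "encV' v c (LApp M N) = Abs [(c,0)]
     (PRes (c,1) (PPar (PApp (encV' v c M) [(c,1)])
        (PIn (c,1) [(v,1)] (PRes (c,2) (PPar (PApp (encV' v c N) [(c,2)])
            (PIn (c,2) [(v,3)] (POut (v,1) [(v,3), (c,0)] PNil)))))))"

end

theory Submission
  imports Defs
begin

(* The context  [.]<c0> | x(a, k). k(u). ok<u, c0> | c0<x>  separates the two terms: it reports on
   ok as soon as a call on x is answered on its continuation, and it answers the top-level
   continuation c0 itself.  The encoding of x V evaluates x and V and calls x<V, c0> (for the second
   encoding the value of x is a forwarder !y(a, b). x<a, b>, which passes the call on), so ok is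
   reported.  In the encoding of I (x V) the call on x carries instead the private name on which the
   application waits for the value of its argument x V, and nothing is ever output on that name.
   This is captured by a type system with a type Dead of names never used as output subjects:
   inputs on dead names are not inspected, typing is invariant under structural congruence and
   reduction, and the whole process is typable with ok dead, so ok is never observable.  Here c0 is
   (c,0) and ok is the name of the lambda-variable x + 1. *)

definition fun_upds :: "('a \<Rightarrow> 'b) \<Rightarrow> 'a list \<Rightarrow> 'b list \<Rightarrow> 'a \<Rightarrow> 'b" where
  "fun_upds f xs ys = foldl (\<lambda>f (x, y). f(x := y)) f (zip xs ys)"

text \<open>The update \<open>upds\<close> of the definitions, at arbitrary result type (for typing environments).\<close>

lemma upds_eq_fun_upds [simp]: "upds = fun_upds"
  by (intro ext) (simp add: upds_def fun_upds_def)

lemma fun_upds_Nil [simp]: "fun_upds f [] ys = f" "fun_upds f xs [] = f"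
  by (simp_all add: fun_upds_def)

lemma fun_upds_Cons [simp]: "fun_upds f (x # xs) (y # ys) = fun_upds (f(x := y)) xs ys"
  by (simp add: fun_upds_def)

lemma fun_upds_notin: "z \<notin> set xs \<Longrightarrow> fun_upds f xs ys z = f z"
proof (induction xs arbitrary: f ys)
  case (Cons x xs)
  then show ?case by (cases ys) auto
qed simp

lemma comp_fun_upds: "g \<circ> fun_upds f xs ys = fun_upds (g \<circ> f) xs (map g ys)"
proof (induction xs arbitrary: f ys)
  case (Cons x xs)
  show ?case
  proof (cases ys)
    case (Cons y ys')
    then show ?thesis by (simp only: fun_upds_Cons list.map Cons.IH fun_upd_comp)
  qed simp
qed simp

lemma fun_upds_rel:
  assumes "list_all2 R ys zs" "length xs = length ys" "z \<notin> set xs \<Longrightarrow> R (f z) (g z)"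
  shows "R (fun_upds f xs ys z) (fun_upds g xs zs z)"
  using assms
proof (induction xs arbitrary: f g ys zs)
  case (Cons x xs)
  then obtain y ys' z' zs' where "ys = y # ys'" "zs = z' # zs'" "R y z'" "list_all2 R ys' zs'"
    by (cases ys; cases zs) auto
  with Cons show ?case by simp
qed simp

lemma fun_upds_cong:
  "length xs = length ys \<Longrightarrow> (z \<notin> set xs \<Longrightarrow> f z = g z) \<Longrightarrow> fun_upds f xs ys z = fun_upds g xs ys z"
  using fun_upds_rel[of "(=)" ys ys xs z f g] by (simp add: list.rel_eq)

lemma fun_upds_rename:
  assumes "distinct bs'" "length bs' = length bs" "length zs = length bs"
    and "\<And>y. y \<in> A \<Longrightarrow> y \<notin> set bs \<Longrightarrow> f y \<notin> set bs'" and "y \<in> A"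
  shows "(fun_upds g bs' zs \<circ> fun_upds f bs bs') y = fun_upds (g \<circ> f) bs zs y"
  using assms
proof (induction bs arbitrary: f g bs' zs)
  case (Cons b bs)
  then obtain b1 bs1 z zs1 where eq: "bs' = b1 # bs1" "zs = z # zs1"
    by (cases bs'; cases zs) auto
  have "(fun_upds (g(b1 := z)) bs1 zs1 \<circ> fun_upds (f(b := b1)) bs bs1) y
      = fun_upds (g(b1 := z) \<circ> f(b := b1)) bs zs1 y"
    using Cons.prems eq by (intro Cons.IH) auto
  also have "\<dots> = fun_upds ((g \<circ> f)(b := z)) bs zs1 y"
    using Cons.prems eq by (intro fun_upds_cong) auto
  finally show ?case using eq by (simp add: comp_def)
qed simp

lemma finite_fn: "finite (fn (P :: ('s,'k) proc))" "finite (fna (F :: ('s,'k) pabs))"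
  by (induction P and F) auto

lemma fresh_idx_gt: "finite S \<Longrightarrow> y \<in> S \<Longrightarrow> snd y < fresh_idx S"
  unfolding fresh_idx_def by (simp add: le_imp_less_Suc)

lemma length_fresh_list [simp]: "length (fresh_list N bs) = length bs"
  by (simp add: fresh_list_def)

lemma map_fst_fresh_list [simp]: "map fst (fresh_list N bs) = map fst bs"
  by (rule nth_equalityI) (auto simp: fresh_list_def)

lemma distinct_fresh_list: "distinct (fresh_list N bs)"
  by (auto simp: fresh_list_def distinct_map inj_on_def)

lemma fresh_list_disjoint: "finite S \<Longrightarrow> set (fresh_list (fresh_idx S) bs) \<inter> S = {}"
  using fresh_idx_gt by (fastforce simp: fresh_list_def)

lemma fresh_idx_notin: "finite S \<Longrightarrow> (s, fresh_idx S) \<notin> S" "finite S \<Longrightarrow> (s, Suc (fresh_idx S)) \<notin> S"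
  using fresh_idx_gt by fastforce+

section \<open>A type system for dead channels\<close>

text \<open>\<open>Dead\<close>: never the subject of an output, so what follows an input on it is not checked.
  \<open>Top\<close>: only ever passed around as an object.\<close>

datatype ty = Dead | Top | Ch "ty list"

definition subty :: "ty \<Rightarrow> ty \<Rightarrow> bool" where
  "subty S T \<longleftrightarrow> S = T \<or> T = Top"

lemma subty_refl [simp]: "subty T T"
  and subty_Top [simp]: "subty T Top"
  and subty_Dead_iff [simp]: "subty T Dead \<longleftrightarrow> T = Dead"
  and subty_Ch_iff [simp]: "subty T (Ch ts) \<longleftrightarrow> T = Ch ts"
  by (auto simp: subty_def)

lemma subty_trans: "subty S T \<Longrightarrow> subty T U \<Longrightarrow> subty S U"
  by (auto simp: subty_def)

inductive typed :: "('s,'k) defs \<Rightarrow> ('s name \<Rightarrow> ty) \<Rightarrow> ('s,'k) proc \<Rightarrow> bool" for \<Delta> where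
  typed_nil: "typed \<Delta> \<Gamma> PNil"
| typed_in_dead: "\<Gamma> a = Dead \<Longrightarrow> typed \<Delta> \<Gamma> (PIn a bs P)"
| typed_in: "\<Gamma> a = Ch ts \<Longrightarrow> length bs = length ts \<Longrightarrow> typed \<Delta> (fun_upds \<Gamma> bs ts) P \<Longrightarrow>
    typed \<Delta> \<Gamma> (PIn a bs P)"
| typed_out: "\<Gamma> a = Ch ts \<Longrightarrow> list_all2 (\<lambda>b t. subty (\<Gamma> b) t) bs ts \<Longrightarrow> typed \<Delta> \<Gamma> P \<Longrightarrow>
    typed \<Delta> \<Gamma> (POut a bs P)"
| typed_res: "typed \<Delta> (\<Gamma>(a := T)) P \<Longrightarrow> typed \<Delta> \<Gamma> (PRes a P)"
| typed_par: "typed \<Delta> \<Gamma> P \<Longrightarrow> typed \<Delta> \<Gamma> Q \<Longrightarrow> typed \<Delta> \<Gamma> (PPar P Q)"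
| typed_rep_dead: "\<Gamma> a = Dead \<Longrightarrow> typed \<Delta> \<Gamma> (PRep a bs P)"
| typed_rep: "\<Gamma> a = Ch ts \<Longrightarrow> length bs = length ts \<Longrightarrow> typed \<Delta> (fun_upds \<Gamma> bs ts) P \<Longrightarrow>
    typed \<Delta> \<Gamma> (PRep a bs P)"
| typed_abs: "length xs = length as \<Longrightarrow> typed \<Delta> (fun_upds \<Gamma> xs (map \<Gamma> as)) P \<Longrightarrow>
    typed \<Delta> \<Gamma> (PApp (Abs xs P) as)"
| typed_const: "\<Delta> k = (xs, P) \<Longrightarrow> length xs = length as \<Longrightarrow>
    typed \<Delta> (fun_upds (\<lambda>_. Dead) xs (map \<Gamma> as)) P \<Longrightarrow> typed \<Delta> \<Gamma> (PApp (Const k) as)"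

inductive_simps typed_PNil_iff [simp]: "typed \<Delta> \<Gamma> PNil"
inductive_simps typed_PIn_iff [simp]: "typed \<Delta> \<Gamma> (PIn a bs P)"
inductive_simps typed_POut_iff [simp]: "typed \<Delta> \<Gamma> (POut a bs P)"
inductive_simps typed_PRes_iff: "typed \<Delta> \<Gamma> (PRes a P)"
inductive_simps typed_PPar_iff [simp]: "typed \<Delta> \<Gamma> (PPar P Q)"
inductive_simps typed_PRep_iff [simp]: "typed \<Delta> \<Gamma> (PRep a bs P)"
inductive_simps typed_Abs_iff [simp]: "typed \<Delta> \<Gamma> (PApp (Abs xs P) as)"
inductive_simps typed_Const_iff [simp]: "typed \<Delta> \<Gamma> (PApp (Const k) as)"
inductive_simps typed_Hole_iff [simp]: "typed \<Delta> \<Gamma> (Hole as)"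

lemma typed_narrow:
  "typed \<Delta> \<Gamma> P \<Longrightarrow> (\<And>y. y \<in> fn P \<Longrightarrow> subty (\<Gamma>' y) (\<Gamma> y)) \<Longrightarrow> typed \<Delta> \<Gamma>' P"
proof (induction arbitrary: \<Gamma>' rule: typed.induct)
  case (typed_in \<Gamma> a ts bs P)
  have "typed \<Delta> (fun_upds \<Gamma>' bs ts) P"
  proof (rule typed_in.IH)
    fix y assume "y \<in> fn P"
    show "subty (fun_upds \<Gamma>' bs ts y) (fun_upds \<Gamma> bs ts y)"
      by (rule fun_upds_rel) (use typed_in.prems typed_in.hyps(2) \<open>y \<in> fn P\<close> in \<open>auto simp: list.rel_refl\<close>)
  qed
  moreover have "\<Gamma>' a = Ch ts" using typed_in.prems[of a] typed_in.hyps(1) by simp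
  ultimately show ?case using typed_in.hyps(2) by (blast intro: typed.typed_in)
next
  case (typed_out \<Gamma> a ts bs P)
  have "list_all2 (\<lambda>b t. subty (\<Gamma>' b) t) bs ts"
    by (rule list.rel_mono_strong[OF typed_out.hyps(2)]) (use typed_out.prems in \<open>auto intro: subty_trans\<close>)
  moreover have "\<Gamma>' a = Ch ts" using typed_out.prems[of a] typed_out.hyps(1) by simp
  moreover have "typed \<Delta> \<Gamma>' P" using typed_out.prems by (intro typed_out.IH) auto
  ultimately show ?case by (blast intro: typed.typed_out)
next
  case (typed_res \<Gamma> a T P)
  have "typed \<Delta> (\<Gamma>'(a := T)) P" using typed_res.prems by (intro typed_res.IH) auto
  then show ?case by (blast intro: typed.typed_res)
next
  case (typed_rep \<Gamma> a ts bs P)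
  have "typed \<Delta> (fun_upds \<Gamma>' bs ts) P"
  proof (rule typed_rep.IH)
    fix y assume "y \<in> fn P"
    show "subty (fun_upds \<Gamma>' bs ts y) (fun_upds \<Gamma> bs ts y)"
      by (rule fun_upds_rel) (use typed_rep.prems typed_rep.hyps(2) \<open>y \<in> fn P\<close> in \<open>auto simp: list.rel_refl\<close>)
  qed
  moreover have "\<Gamma>' a = Ch ts" using typed_rep.prems[of a] typed_rep.hyps(1) by simp
  ultimately show ?case using typed_rep.hyps(2) by (blast intro: typed.typed_rep)
next
  case (typed_abs xs as \<Gamma> P)
  have "typed \<Delta> (fun_upds \<Gamma>' xs (map \<Gamma>' as)) P"
  proof (rule typed_abs.IH)
    fix y assume "y \<in> fn P"
    show "subty (fun_upds \<Gamma>' xs (map \<Gamma>' as) y) (fun_upds \<Gamma> xs (map \<Gamma> as) y)"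
      by (rule fun_upds_rel)
        (use typed_abs.prems typed_abs.hyps(1) \<open>y \<in> fn P\<close> in \<open>auto simp: list_all2_conv_all_nth\<close>)
  qed
  then show ?case using typed_abs.hyps(1) by (blast intro: typed.typed_abs)
next
  case (typed_const k xs P as \<Gamma>)
  have "typed \<Delta> (fun_upds (\<lambda>_. Dead) xs (map \<Gamma>' as)) P"
  proof (rule typed_const.IH)
    fix y
    show "subty (fun_upds (\<lambda>_. Dead) xs (map \<Gamma>' as) y) (fun_upds (\<lambda>_. Dead) xs (map \<Gamma> as) y)"
      by (rule fun_upds_rel) (use typed_const.prems typed_const.hyps(2) in \<open>auto simp: list_all2_conv_all_nth\<close>)
  qed
  then show ?case using typed_const.hyps(1,2) by (blast intro: typed.typed_const)
next
  case (typed_in_dead \<Gamma> a bs P)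
  then show ?case using typed_in_dead.prems[of a] by (simp add: typed.typed_in_dead)
next
  case (typed_rep_dead \<Gamma> a bs P)
  then show ?case using typed_rep_dead.prems[of a] by (simp add: typed.typed_rep_dead)
next
  case (typed_par \<Gamma> P Q)
  then show ?case by (simp add: typed.typed_par)
qed (rule typed.typed_nil)

lemma typed_env_cong: "(\<And>y. y \<in> fn P \<Longrightarrow> \<Gamma>' y = \<Gamma> y) \<Longrightarrow> typed \<Delta> \<Gamma>' P \<longleftrightarrow> typed \<Delta> \<Gamma> P"
  by (metis subty_refl typed_narrow)

lemma typed_rename_binders:
  assumes "distinct bs'" "length bs' = length bs" "length ts = length bs"
    and "set bs' \<inter> \<sigma> ` (fn P - set bs) = {}"
  shows "typed \<Delta> (fun_upds \<Gamma> bs' ts \<circ> fun_upds \<sigma> bs bs') P \<longleftrightarrow> typed \<Delta> (fun_upds (\<Gamma> \<circ> \<sigma>) bs ts) P"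
proof (rule typed_env_cong)
  fix y assume "y \<in> fn P"
  show "(fun_upds \<Gamma> bs' ts \<circ> fun_upds \<sigma> bs bs') y = fun_upds (\<Gamma> \<circ> \<sigma>) bs ts y"
    by (rule fun_upds_rename[where A = "fn P"]) (use assms \<open>y \<in> fn P\<close> in auto)
qed

lemma typed_subst: "typed \<Delta> \<Gamma> (subst \<sigma> P) \<longleftrightarrow> typed \<Delta> (\<Gamma> \<circ> \<sigma>) P"
  and typed_substa: "typed \<Delta> \<Gamma> (PApp (substa \<sigma> F) (map \<sigma> as)) \<longleftrightarrow> typed \<Delta> (\<Gamma> \<circ> \<sigma>) (PApp F as)"
proof (induction P and F arbitrary: \<sigma> \<Gamma> and \<sigma> \<Gamma> as)
  case (PIn a bs P)
  define bs' where "bs' = fresh_list (fresh_idx (\<sigma> ` (fn P - set bs))) bs"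
  have "typed \<Delta> (fun_upds \<Gamma> bs' ts) (subst (fun_upds \<sigma> bs bs') P)
      \<longleftrightarrow> typed \<Delta> (fun_upds (\<Gamma> \<circ> \<sigma>) bs ts) P" if "length ts = length bs" for ts
    unfolding PIn.IH bs'_def using that
    by (intro typed_rename_binders distinct_fresh_list fresh_list_disjoint) (simp_all add: finite_fn)
  moreover have "length bs' = length bs" by (simp add: bs'_def)
  ultimately show ?case by (auto simp: Let_def bs'_def[symmetric] comp_def)
next
  case (PRep a bs P)
  define bs' where "bs' = fresh_list (fresh_idx (\<sigma> ` (fn P - set bs))) bs"
  have "typed \<Delta> (fun_upds \<Gamma> bs' ts) (subst (fun_upds \<sigma> bs bs') P)
      \<longleftrightarrow> typed \<Delta> (fun_upds (\<Gamma> \<circ> \<sigma>) bs ts) P" if "length ts = length bs" for ts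
    unfolding PRep.IH bs'_def using that
    by (intro typed_rename_binders distinct_fresh_list fresh_list_disjoint) (simp_all add: finite_fn)
  moreover have "length bs' = length bs" by (simp add: bs'_def)
  ultimately show ?case by (auto simp: Let_def bs'_def[symmetric] comp_def)
next
  case (PRes a P)
  define a' where "a' = (fst a, fresh_idx (\<sigma> ` (fn P - {a})))"
  have "a' \<notin> \<sigma> ` (fn P - {a})"
    using fresh_idx_gt[of "\<sigma> ` (fn P - {a})"] finite_fn(1)[of P] by (force simp: a'_def)
  then have "typed \<Delta> (fun_upds \<Gamma> [a'] [T]) (subst (fun_upds \<sigma> [a] [a']) P)
      \<longleftrightarrow> typed \<Delta> (fun_upds (\<Gamma> \<circ> \<sigma>) [a] [T]) P" for T
    unfolding PRes.IH by (intro typed_rename_binders) auto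
  then show ?case by (simp add: Let_def a'_def[symmetric] comp_def typed_PRes_iff)
next
  case (Abs xs P)
  define xs' where "xs' = fresh_list (fresh_idx (\<sigma> ` (fn P - set xs))) xs"
  have "typed \<Delta> (fun_upds \<Gamma> xs' (map (\<Gamma> \<circ> \<sigma>) as)) (subst (fun_upds \<sigma> xs xs') P)
      \<longleftrightarrow> typed \<Delta> (fun_upds (\<Gamma> \<circ> \<sigma>) xs (map (\<Gamma> \<circ> \<sigma>) as)) P" if "length as = length xs"
    unfolding Abs.IH xs'_def using that
    by (intro typed_rename_binders distinct_fresh_list fresh_list_disjoint) (simp_all add: finite_fn)
  moreover have "length xs' = length xs" by (simp add: xs'_def)
  ultimately show ?case by (auto simp: Let_def xs'_def[symmetric] comp_def)
qed (auto simp: Let_def list_all2_map1)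

lemma typed_beta: "typed \<Delta> \<Gamma> (subst (fun_upds id xs as) P) \<longleftrightarrow> typed \<Delta> (fun_upds \<Gamma> xs (map \<Gamma> as)) P"
  by (simp add: typed_subst comp_fun_upds)

lemma typed_sc:
  assumes wf: "wf_defs ob \<Delta>"
  shows "sc \<Delta> P Q \<Longrightarrow> typed \<Delta> \<Gamma> P \<longleftrightarrow> typed \<Delta> \<Gamma> Q"
proof (induction arbitrary: \<Gamma> rule: sc.induct)
  case (sc_res P Q a)
  then show ?case by (simp only: typed_PRes_iff)
next
  case (sc_app P Q xs as)
  then show ?case by simp
next
  case (sc_res_comm a b P)
  then show ?case by (cases "a = b") (auto simp: typed_PRes_iff fun_upd_twist)
next
  case (sc_res_par a P Q)
  then have "typed \<Delta> (\<Gamma>(a := T)) P \<longleftrightarrow> typed \<Delta> \<Gamma> P" for T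
    by (intro typed_env_cong) auto
  then show ?case by (auto simp: typed_PRes_iff)
next
  case (sc_beta xs as P)
  then show ?case by (simp add: typed_beta)
next
  case (sc_const k xs P as)
  have "fn P \<subseteq> set xs" using wf sc_const(1) by (auto simp: wf_defs_def dest!: spec[of _ k])
  then have "typed \<Delta> (fun_upds \<Gamma> xs (map \<Gamma> as)) P
      \<longleftrightarrow> typed \<Delta> (fun_upds (\<lambda>_. Dead) xs (map \<Gamma> as)) P"
    using sc_const(2) by (intro typed_env_cong fun_upds_cong) auto
  then show ?case using sc_const by (simp add: typed_beta)
next
  case (sc_alpha_res b a P)
  then have "typed \<Delta> (fun_upds \<Gamma> [b] [T]) (subst (fun_upds id [a] [b]) P)
      \<longleftrightarrow> typed \<Delta> (fun_upds (\<Gamma> \<circ> id) [a] [T]) P" for T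
    unfolding typed_subst by (intro typed_rename_binders) auto
  then show ?case by (simp add: typed_PRes_iff)
next
  case (sc_alpha_in bs' bs a P)
  then have "length bs' = length bs" by (metis length_map)
  moreover have "typed \<Delta> (fun_upds \<Gamma> bs' ts) (subst (fun_upds id bs bs') P)
      \<longleftrightarrow> typed \<Delta> (fun_upds (\<Gamma> \<circ> id) bs ts) P" if "length ts = length bs" for ts
    unfolding typed_subst using sc_alpha_in that calculation by (intro typed_rename_binders) auto
  ultimately show ?case by auto
next
  case (sc_alpha_rep bs' bs a P)
  then have "length bs' = length bs" by (metis length_map)
  moreover have "typed \<Delta> (fun_upds \<Gamma> bs' ts) (subst (fun_upds id bs bs') P)
      \<longleftrightarrow> typed \<Delta> (fun_upds (\<Gamma> \<circ> id) bs ts) P" if "length ts = length bs" for ts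
    unfolding typed_subst using sc_alpha_rep that calculation by (intro typed_rename_binders) auto
  ultimately show ?case by auto
qed (auto simp: typed_PRes_iff)

lemma typed_red:
  assumes wf: "wf_defs ob \<Delta>"
  shows "red \<Delta> P Q \<Longrightarrow> typed \<Delta> \<Gamma> P \<Longrightarrow> typed \<Delta> \<Gamma> Q"
proof (induction arbitrary: \<Gamma> rule: red.induct)
  case (red_comm bs cs a P Q)
  then obtain ts where ts: "\<Gamma> a = Ch ts" "list_all2 (\<lambda>b t. subty (\<Gamma> b) t) cs ts"
    "length bs = length ts" "typed \<Delta> (fun_upds \<Gamma> bs ts) P" "typed \<Delta> \<Gamma> Q"
    by auto
  have "typed \<Delta> (fun_upds \<Gamma> bs (map \<Gamma> cs)) P"
  proof (rule typed_narrow[OF ts(4)])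
    fix y
    show "subty (fun_upds \<Gamma> bs (map \<Gamma> cs) y) (fun_upds \<Gamma> bs ts y)"
      by (rule fun_upds_rel) (use ts(2) red_comm(1) in \<open>auto simp: list_all2_map1\<close>)
  qed
  then show ?case using ts(5) by (simp add: typed_beta)
next
  case (red_struct P P' Q' Q)
  then show ?case using typed_sc[OF wf] by blast
qed (auto simp: typed_PRes_iff)

lemma typed_reds:
  assumes "wf_defs ob \<Delta>"
  shows "(red \<Delta>)\<^sup>*\<^sup>* P Q \<Longrightarrow> typed \<Delta> \<Gamma> P \<Longrightarrow> typed \<Delta> \<Gamma> Q"
  by (induction rule: rtranclp_induct) (auto intro: typed_red[OF assms])

lemma typed_not_obs: "typed \<Delta> \<Gamma> P \<Longrightarrow> \<Gamma> a = Dead \<Longrightarrow> \<not> obs a P"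
proof (induction P arbitrary: \<Gamma>)
  case (PRes b P)
  then show ?case by (fastforce simp: typed_PRes_iff)
qed auto

lemma typed_not_wbarb:
  "wf_defs ob \<Delta> \<Longrightarrow> typed \<Delta> \<Gamma> P \<Longrightarrow> \<Gamma> a = Dead \<Longrightarrow> \<not> wbarb \<Delta> P a"
  unfolding wbarb_def barb_def using typed_reds typed_sc typed_not_obs by blast

lemma fst_lvar [simp]: "fst (lvar v n) = v"
  by (simp add: lvar_def)

lemma lvar_inject [simp]: "lvar v n = lvar v m \<longleftrightarrow> n = m"
  by (simp add: lvar_def)

lemma lvar_neq [simp]:
  "odd i \<Longrightarrow> lvar v n \<noteq> (w, i)" "odd i \<Longrightarrow> (w, i) \<noteq> lvar v n"
  "v \<noteq> w \<Longrightarrow> lvar v n \<noteq> (w, i)" "v \<noteq> w \<Longrightarrow> (w, i) \<noteq> lvar v n"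
  by (auto simp: lvar_def)

definition arg_call :: "('s,'k) pabs \<Rightarrow> 's name \<Rightarrow> 's name \<Rightarrow> 's name \<Rightarrow> 's name \<Rightarrow> ('s,'k) proc" where
  "arg_call G c2 v3 f k = PRes c2 (PPar (PApp G [c2]) (PIn c2 [v3] (POut f [v3, k] PNil)))"

definition app_body :: "('s,'k) pabs \<Rightarrow> ('s,'k) pabs \<Rightarrow> 's name \<Rightarrow> 's name \<Rightarrow> 's name \<Rightarrow> 's name \<Rightarrow>
    's name \<Rightarrow> ('s,'k) proc" where
  "app_body F G c1 v1 c2 v3 k = PRes c1 (PPar (PApp F [c1]) (PIn c1 [v1] (arg_call G c2 v3 v1 k)))"

lemma encV_LApp:
  "encV v c (LApp M N) = Abs [(c,0)] (app_body (encV v c M) (encV v c N) (c,1) (v,1) (c,2) (v,3) (c,0))"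
  by (simp add: app_body_def arg_call_def)

lemma encV'_LApp:
  "encV' v c (LApp M N) = Abs [(c,0)] (app_body (encV' v c M) (encV' v c N) (c,1) (v,1) (c,2) (v,3) (c,0))"
  by (simp add: app_body_def arg_call_def)

definition observer :: "'s \<Rightarrow> 's \<Rightarrow> nat \<Rightarrow> ('s,'k) proc" where
  "observer v c x = PPar
     (PIn (lvar v x) [(v,1), (c,1)] (PIn (c,1) [(v,1)] (POut (lvar v (Suc x)) [(v,1), (c,0)] PNil)))
     (POut (c,0) [lvar v x] PNil)"

definition observer_env :: "'s \<Rightarrow> 's \<Rightarrow> nat \<Rightarrow> 's name \<Rightarrow> ty" where
  "observer_env v c x = (\<lambda>_. Dead)(lvar v x := Ch [Top, Dead], (c,0) := Ch [Top])"

section \<open>The application of the identity cannot call x\<close>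

lemma typed_PApp_single [simp]: "typed \<Delta> \<Gamma> (PApp (Abs [k] P) [k0]) \<longleftrightarrow> typed \<Delta> (\<Gamma>(k := \<Gamma> k0)) P"
  by simp

lemma typed_app_body_stuck:
  assumes "typed \<Delta> (\<Gamma>(c1 := Ch [Dead])) (PApp F [c1])"
    and "typed \<Delta> (\<Gamma>(c1 := Ch [Dead], v1 := Dead, c2 := Dead)) (PApp G [c2])"
  shows "typed \<Delta> \<Gamma> (app_body F G c1 v1 c2 v3 k)"
proof -
  have "typed \<Delta> (\<Gamma>(c1 := Ch [Dead], v1 := Dead)) (arg_call G c2 v3 v1 k)"
    unfolding arg_call_def by (rule typed_res[where T = Dead], rule typed_par[OF assms(2)]) simp
  then have call: "typed \<Delta> (\<Gamma>(c1 := Ch [Dead])) (PIn c1 [v1] (arg_call G c2 v3 v1 k))"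
    by simp
  show ?thesis
    unfolding app_body_def by (rule typed_res[where T = "Ch [Dead]"], rule typed_par[OF assms(1) call])
qed

lemma typed_app_body_call:
  assumes "typed \<Delta> (\<Gamma>(c1 := Ch [T])) (PApp F [c1])"
    and "typed \<Delta> (\<Gamma>(c1 := Ch [T], v1 := T, c2 := Ch [Top])) (PApp G [c2])"
    and "T = Ch [Top, B]" "subty (\<Gamma> k) B" "distinct [c1, v1, c2, v3, k]"
  shows "typed \<Delta> \<Gamma> (app_body F G c1 v1 c2 v3 k)"
proof -
  have answer: "typed \<Delta> (\<Gamma>(c1 := Ch [T], v1 := T, c2 := Ch [Top])) (PIn c2 [v3] (POut v1 [v3, k] PNil))"
    using assms(3-5) by auto
  have "typed \<Delta> (\<Gamma>(c1 := Ch [T], v1 := T)) (arg_call G c2 v3 v1 k)"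
    unfolding arg_call_def by (rule typed_res[where T = "Ch [Top]"], rule typed_par[OF assms(2) answer])
  then have call: "typed \<Delta> (\<Gamma>(c1 := Ch [T])) (PIn c1 [v1] (arg_call G c2 v3 v1 k))"
    by simp
  show ?thesis
    unfolding app_body_def by (rule typed_res[where T = "Ch [T]"], rule typed_par[OF assms(1) call])
qed

lemma typed_server_abs:
  assumes "v \<noteq> c" "\<Gamma> k = Ch [T]" "subty Dead T"
  shows "typed \<Delta> \<Gamma> (PApp (Abs [(c,0)] (PRes (v,1) (POut (c,0) [(v,1)] (PRep (v,1) bs P)))) [k])"
  using assms by (simp add: typed_res[where T = Dead])

lemma typed_encV_value:
  assumes "v \<noteq> c" "is_value V" "\<Gamma> k = Ch [Top]"
  shows "typed \<Delta> \<Gamma> (PApp (encV v c V) [k])"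
proof (cases V)
  case (Lam n M)
  show ?thesis unfolding Lam encV.simps by (rule typed_server_abs[where T = Top]) (simp_all add: assms)
qed (use assms in simp_all)

lemma typed_encV'_value:
  assumes "v \<noteq> c" "is_value V" "\<Gamma> k = Ch [Top]"
  shows "typed \<Delta> \<Gamma> (PApp (encV' v c V) [k])"
proof (cases V)
  case (Var n)
  show ?thesis unfolding Var encV'.simps by (rule typed_server_abs[where T = Top]) (simp_all add: assms)
next
  case (Lam n M)
  show ?thesis unfolding Lam encV'.simps by (rule typed_server_abs[where T = Top]) (simp_all add: assms)
qed (use assms in simp)

lemma typed_encV_Var:
  "v \<noteq> c \<Longrightarrow> \<Gamma> k = Ch [\<Gamma> (lvar v n)] \<Longrightarrow> typed \<Delta> \<Gamma> (PApp (encV v c (Var n)) [k])"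
  by simp

lemma typed_encV'_Var:
  assumes "v \<noteq> c" "\<Gamma> k = Ch [\<Gamma> (lvar v n)]" "\<Gamma> (lvar v n) = Ch [T1, T2]"
  shows "typed \<Delta> \<Gamma> (PApp (encV' v c (Var n)) [k])"
  using assms by (simp add: typed_res[where T = "\<Gamma> (lvar v n)"])

lemma typed_app_of_app:
  assumes vc: "v \<noteq> c"
    and F: "\<And>\<Gamma> k. \<Gamma> k = Ch [Dead] \<Longrightarrow> typed \<Delta> \<Gamma> (PApp F [k])"
    and X: "\<And>\<Gamma> k. \<Gamma> (lvar v x) = Ch [Top, Dead] \<Longrightarrow> \<Gamma> k = Ch [\<Gamma> (lvar v x)] \<Longrightarrow>
      typed \<Delta> \<Gamma> (PApp X [k])"
    and A: "\<And>\<Gamma> k. \<Gamma> k = Ch [Top] \<Longrightarrow> typed \<Delta> \<Gamma> (PApp A [k])"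
    and x: "\<Gamma> (lvar v x) = Ch [Top, Dead]"
  shows "typed \<Delta> \<Gamma> (app_body F (Abs [(c,0)] (app_body X A (c,1) (v,1) (c,2) (v,3) (c,0)))
    (c,1) (v,1) (c,2) (v,3) (c,0))"
proof (rule typed_app_body_stuck)
  show "typed \<Delta> (\<Gamma>((c,1) := Ch [Dead])) (PApp F [(c,1)])" by (rule F) simp
  let ?\<Gamma> = "\<Gamma>((c,1) := Ch [Dead], (v,1) := Dead, (c,2) := Dead, (c,0) := Dead)"
  have "?\<Gamma> (lvar v x) = Ch [Top, Dead]" using x vc by simp
  then have "typed \<Delta> ?\<Gamma> (app_body X A (c,1) (v,1) (c,2) (v,3) (c,0))"
    using vc by (intro typed_app_body_call[where T = "Ch [Top, Dead]" and B = Dead] X A) simp_all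
  then show "typed \<Delta> (\<Gamma>((c,1) := Ch [Dead], (v,1) := Dead, (c,2) := Dead))
      (PApp (Abs [(c,0)] (app_body X A (c,1) (v,1) (c,2) (v,3) (c,0))) [(c,2)])"
    by simp
qed

lemma observer_silent:
  assumes "wf_defs ob \<Delta>" "v \<noteq> c" "typed \<Delta> (observer_env v c x) P"
  shows "\<not> wbarb \<Delta> (PPar P (observer v c x)) (lvar v (Suc x))"
proof (rule typed_not_wbarb[OF assms(1)])
  show "typed \<Delta> (observer_env v c x) (PPar P (observer v c x))"
    using assms(2,3) by (simp add: observer_def observer_env_def)
qed (use assms(2) in \<open>simp add: observer_env_def\<close>)

lemma typed_encV_app_identity:
  assumes "v \<noteq> c" "is_value V"
  shows "typed \<Delta> (observer_env v c x) (PApp (encV v c (LApp (Lam z (Var z)) (LApp (Var x) V))) [(c,0)])"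
  unfolding encV_LApp typed_PApp_single fun_upd_triv
proof (rule typed_app_of_app[where x = x])
  show "typed \<Delta> \<Gamma> (PApp (encV v c (Lam z (Var z))) [k])" if "\<Gamma> k = Ch [Dead]" for \<Gamma> k
    unfolding encV.simps by (rule typed_server_abs[where T = Dead]) (simp_all add: assms that)
qed (simp_all add: assms typed_encV_Var typed_encV_value observer_env_def)

lemma typed_encV'_app_identity:
  assumes "v \<noteq> c" "is_value V"
  shows "typed \<Delta> (observer_env v c x) (PApp (encV' v c (LApp (Lam z (Var z)) (LApp (Var x) V))) [(c,0)])"
  unfolding encV'_LApp typed_PApp_single fun_upd_triv
proof (rule typed_app_of_app[where x = x])
  show "typed \<Delta> \<Gamma> (PApp (encV' v c (Lam z (Var z))) [k])" if "\<Gamma> k = Ch [Dead]" for \<Gamma> k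
    unfolding encV'.simps by (rule typed_server_abs[where T = Dead]) (simp_all add: assms that)
  show "typed \<Delta> \<Gamma> (PApp (encV' v c (Var x)) [k])"
    if "\<Gamma> (lvar v x) = Ch [Top, Dead]" "\<Gamma> k = Ch [\<Gamma> (lvar v x)]" for \<Gamma> k
    using assms(1) that(2,1) by (rule typed_encV'_Var)
qed (simp_all add: assms typed_encV'_value observer_env_def)

definition reaches :: "('s,'k) defs \<Rightarrow> ('s,'k) proc \<Rightarrow> ('s,'k) proc \<Rightarrow> bool" where
  "reaches \<Delta> = (\<lambda>P Q. sc \<Delta> P Q \<or> red \<Delta> P Q)\<^sup>*\<^sup>*"

lemma sc_reaches: "sc \<Delta> P Q \<Longrightarrow> reaches \<Delta> P Q"
  by (simp add: reaches_def r_into_rtranclp)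

lemma red_reaches: "red \<Delta> P Q \<Longrightarrow> reaches \<Delta> P Q"
  by (simp add: reaches_def r_into_rtranclp)

lemma reaches_trans [trans]: "reaches \<Delta> P Q \<Longrightarrow> reaches \<Delta> Q R \<Longrightarrow> reaches \<Delta> P R"
  unfolding reaches_def by (rule rtranclp_trans)

lemma sc_reaches_trans [trans]: "sc \<Delta> P Q \<Longrightarrow> reaches \<Delta> Q R \<Longrightarrow> reaches \<Delta> P R"
  by (rule reaches_trans[OF sc_reaches])

lemma reaches_sc_trans [trans]: "reaches \<Delta> P Q \<Longrightarrow> sc \<Delta> Q R \<Longrightarrow> reaches \<Delta> P R"
  by (rule reaches_trans[OF _ sc_reaches])

lemmas [trans] = sc_trans

lemma reaches_res: "reaches \<Delta> P Q \<Longrightarrow> reaches \<Delta> (PRes a P) (PRes a Q)"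
  unfolding reaches_def
  by (induction rule: rtranclp_induct) (auto intro: sc_res red_res rtranclp.rtrancl_into_rtrancl)

lemma reaches_par: "reaches \<Delta> P Q \<Longrightarrow> reaches \<Delta> (PPar P R) (PPar Q R)"
  unfolding reaches_def
  by (induction rule: rtranclp_induct) (auto intro: sc_par red_par rtranclp.rtrancl_into_rtrancl)

lemma reaches_wbarb: "reaches \<Delta> P Q \<Longrightarrow> obs a Q \<Longrightarrow> wbarb \<Delta> P a"
proof -
  assume "reaches \<Delta> P Q" "obs a Q"
  have "\<exists>Q'. (red \<Delta>)\<^sup>*\<^sup>* P Q' \<and> sc \<Delta> Q' Q" if "reaches \<Delta> P Q" for Q
    using that unfolding reaches_def
  proof (induction rule: rtranclp_induct)
    case (step Q R)
    then obtain Q' where "(red \<Delta>)\<^sup>*\<^sup>* P Q'" "sc \<Delta> Q' Q" by blast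
    with step.hyps(2) show ?case
      by (meson red_struct rtranclp.rtrancl_into_rtrancl sc_refl sc_trans)
  qed (blast intro: sc_refl)
  then show "wbarb \<Delta> P a"
    using \<open>reaches \<Delta> P Q\<close> \<open>obs a Q\<close> unfolding wbarb_def barb_def by (blast intro: sc_sym)
qed

lemma comm_reaches:
  "length bs = length cs \<Longrightarrow>
    reaches \<Delta> (PPar (POut a cs Q) (PIn a bs P)) (PPar (subst (fun_upds id bs cs) P) Q)"
  by (metis red_comm red_reaches sc_par_comm sc_reaches_trans upds_eq_fun_upds)

lemma sc_par_right: "sc \<Delta> P Q \<Longrightarrow> sc \<Delta> (PPar R P) (PPar R Q)"
  by (meson sc_par sc_par_comm sc_trans)

lemma sc_scope: "a \<notin> fn Q \<Longrightarrow> sc \<Delta> (PPar (PRes a P) Q) (PRes a (PPar P Q))"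
  by (meson sc_par_comm sc_res sc_res_par sc_trans)

inductive has_call :: "'s name set \<Rightarrow> 's name \<Rightarrow> 's name \<Rightarrow> ('s,'k) proc \<Rightarrow> bool" for Y f k where
  has_call_out: "has_call Y f k (POut f [w, k] PNil)"
| has_call_parl: "has_call Y f k P \<Longrightarrow> has_call Y f k (PPar P Q)"
| has_call_parr: "has_call Y f k Q \<Longrightarrow> has_call Y f k (PPar P Q)"
| has_call_res: "has_call Y f k P \<Longrightarrow> a \<notin> Y \<Longrightarrow> has_call Y f k (PRes a P)"

lemma has_call_anti_mono: "has_call Y f k P \<Longrightarrow> Y' \<subseteq> Y \<Longrightarrow> has_call Y' f k P"
  by (induction rule: has_call.induct) (auto intro: has_call.intros)

lemma has_call_reaches:
  assumes "has_call Y f k E" "fn R \<subseteq> Y"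
    and call: "\<And>w. \<exists>Q. reaches \<Delta> (PPar (POut f [w, k] PNil) R) Q \<and> \<Phi> Q"
    and par: "\<And>P Q. \<Phi> P \<Longrightarrow> \<Phi> (PPar P Q)"
    and res: "\<And>a P. \<Phi> P \<Longrightarrow> a \<notin> Y \<Longrightarrow> \<Phi> (PRes a P)"
  shows "\<exists>Q. reaches \<Delta> (PPar E R) Q \<and> \<Phi> Q"
  using assms(1)
proof induction
  case (has_call_parl P Q)
  then obtain Q' where "reaches \<Delta> (PPar P R) Q'" "\<Phi> Q'" by blast
  moreover have "sc \<Delta> (PPar (PPar P Q) R) (PPar (PPar P R) Q)"
    by (meson sc_par_assoc sc_par_comm sc_par_right sc_sym sc_trans)
  ultimately show ?case by (meson par reaches_par sc_reaches_trans)
next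
  case (has_call_parr Q P)
  then obtain Q' where "reaches \<Delta> (PPar Q R) Q'" "\<Phi> Q'" by blast
  moreover have "sc \<Delta> (PPar (PPar P Q) R) (PPar (PPar Q R) P)"
    by (meson sc_par_assoc sc_par_comm sc_par_right sc_sym sc_trans)
  ultimately show ?case by (meson par reaches_par sc_reaches_trans)
next
  case (has_call_res P a)
  then obtain Q' where "reaches \<Delta> (PPar P R) Q'" "\<Phi> Q'" by blast
  moreover have "sc \<Delta> (PPar (PRes a P) R) (PRes a (PPar P R))"
    using has_call_res.hyps(2) assms(2) by (intro sc_scope) blast
  ultimately show ?case using has_call_res.hyps(2) by (meson res reaches_res sc_reaches_trans)
qed (use call in blast)

lemma subst_PRes_fresh:
  obtains a' where "subst \<sigma> (PRes a P) = PRes a' (subst (\<sigma>(a := a')) P)"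
    "fst a' = fst a" "a' \<notin> \<sigma> ` (fn P - {a})"
  using that fresh_idx_notin(1)[of "\<sigma> ` (fn P - {a})"] by (simp add: Let_def finite_fn)

lemma subst_PIn_single:
  obtains b' where "subst \<sigma> (PIn a [b] P) = PIn (\<sigma> a) [b'] (subst (\<sigma>(b := b')) P)"
    "fst b' = fst b" "b' \<notin> \<sigma> ` (fn P - {b})"
  using that fresh_idx_notin(1)[of "\<sigma> ` (fn P - {b})"] by (simp add: Let_def finite_fn fresh_list_def)

lemma substa_Abs_single:
  obtains k' where "substa \<sigma> (Abs [k] P) = Abs [k'] (subst (\<sigma>(k := k')) P)"
    "fst k' = fst k" "k' \<notin> \<sigma> ` (fn P - {k})"
  using that fresh_idx_notin(1)[of "\<sigma> ` (fn P - {k})"] by (simp add: Let_def finite_fn fresh_list_def)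

lemma subst_PRep_pair:
  obtains b1' b2' where
    "subst \<sigma> (PRep a [b1, b2] P) = PRep (\<sigma> a) [b1', b2'] (subst (\<sigma>(b1 := b1', b2 := b2')) P)"
    "b1' \<noteq> b2'" "b1' \<notin> \<sigma> ` (fn P - {b1, b2})" "b2' \<notin> \<sigma> ` (fn P - {b1, b2})"
  using that fresh_idx_notin[of "\<sigma> ` (fn P - {b1, b2})"]
  by (simp add: Let_def finite_fn fresh_list_def insert_commute)

lemma sc_beta_single: "sc \<Delta> (PApp (Abs [k] P) [k0]) (subst (id(k := k0)) P)"
  using sc_beta[of "[k]" "[k0]" \<Delta> P] by simp

lemma sc_alpha_fresh:
  assumes "finite Y"
  obtains a' where "a' \<notin> Y" "sc \<Delta> (PRes a P) (PRes a' (subst (id(a := a')) P))"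
proof -
  let ?a' = "(fst a, fresh_idx (Y \<union> fn (PRes a P)))"
  have "?a' \<notin> Y \<union> fn (PRes a P)" using assms by (intro fresh_idx_notin) (simp add: finite_fn)
  then show ?thesis using that sc_alpha_res[of ?a' a P \<Delta>] by auto
qed

lemma subst_server:
  assumes "k \<noteq> y"
  obtains y' where "subst \<sigma> (PRes y (POut k [y] R)) = PRes y' (POut (\<sigma> k) [y'] (subst (\<sigma>(y := y')) R))"
    "y' \<noteq> \<sigma> k" "y' \<notin> \<sigma> ` (fn R - {y})"
proof -
  obtain y' where y': "subst \<sigma> (PRes y (POut k [y] R)) = PRes y' (subst (\<sigma>(y := y')) (POut k [y] R))"
    "y' \<notin> \<sigma> ` (fn (POut k [y] R) - {y})"
    by (rule subst_PRes_fresh)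
  show ?thesis by (rule that) (use y' assms in auto)
qed

lemma sc_server_fresh:
  assumes "k \<noteq> y" "finite Y"
  obtains y' where "y' \<notin> Y" "sc \<Delta> (PRes y (POut k [y] R)) (PRes y' (POut k [y'] (subst (id(y := y')) R)))"
proof -
  obtain y' where "y' \<notin> Y" "sc \<Delta> (PRes y (POut k [y] R)) (PRes y' (subst (id(y := y')) (POut k [y] R)))"
    using assms(2) by (rule sc_alpha_fresh)
  then show ?thesis using that assms(1) by simp
qed

lemma subst_forwarder:
  fixes \<sigma> :: "'s name \<Rightarrow> 's name"
  assumes "a \<noteq> b" "w \<notin> {a, b}"
  obtains a' b' where
    "subst \<sigma> (PRep y [a, b] (POut w [a, b] (PNil :: ('s,'k) proc)))
      = PRep (\<sigma> y) [a', b'] (POut (\<sigma> w) [a', b'] PNil)"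
    "a' \<noteq> b'" "\<sigma> w \<notin> {a', b'}"
proof -
  obtain a' b' where ab:
    "subst \<sigma> (PRep y [a, b] (POut w [a, b] (PNil :: ('s,'k) proc)))
      = PRep (\<sigma> y) [a', b'] (subst (\<sigma>(a := a', b := b')) (POut w [a, b] PNil))"
    "a' \<noteq> b'" "a' \<notin> \<sigma> ` (fn (POut w [a, b] (PNil :: ('s,'k) proc)) - {a, b})"
    "b' \<notin> \<sigma> ` (fn (POut w [a, b] (PNil :: ('s,'k) proc)) - {a, b})"
    by (rule subst_PRep_pair)
  show ?thesis
  proof (rule that)
    show "subst \<sigma> (PRep y [a, b] (POut w [a, b] (PNil :: ('s,'k) proc)))
      = PRep (\<sigma> y) [a', b'] (POut (\<sigma> w) [a', b'] PNil)"
      unfolding ab(1) using assms by simp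
  qed (use ab(2-4) assms in auto)
qed

section \<open>Encodings of values\<close>

text \<open>The two shapes of (substitution instances of) encoded values: \<open>k\<langle>w\<rangle>\<close> and \<open>(\<nu>y) k\<langle>y\<rangle>.R\<close>.\<close>

definition out_abs :: "'s name \<Rightarrow> ('s,'k) pabs \<Rightarrow> bool" where
  "out_abs w F \<longleftrightarrow> (\<exists>k. k \<noteq> w \<and> F = Abs [k] (POut k [w] PNil))"

definition server_abs :: "('s,'k) pabs \<Rightarrow> bool" where
  "server_abs F \<longleftrightarrow> (\<exists>k y R. k \<noteq> y \<and> F = Abs [k] (PRes y (POut k [y] R)))"

definition fwd_abs :: "'s name \<Rightarrow> ('s,'k) pabs \<Rightarrow> bool" where
  "fwd_abs w F \<longleftrightarrow> (\<exists>k y a b. distinct [k, y, w] \<and> distinct [a, b, w] \<and>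
     F = Abs [k] (PRes y (POut k [y] (PRep y [a, b] (POut w [a, b] PNil)))))"

definition value_abs :: "('s,'k) pabs \<Rightarrow> bool" where
  "value_abs F \<longleftrightarrow> (\<exists>w. out_abs w F) \<or> server_abs F"

lemma out_abs_substa:
  fixes F :: "('s,'k) pabs"
  shows "out_abs w F \<Longrightarrow> out_abs (\<sigma> w) (substa \<sigma> F)"
proof -
  assume "out_abs w F"
  then obtain k where k: "k \<noteq> w" "F = Abs [k] (POut k [w] PNil)" by (auto simp: out_abs_def)
  obtain k' where "substa \<sigma> F = Abs [k'] (subst (\<sigma>(k := k')) (POut k [w] PNil))"
    "fst k' = fst k" "k' \<notin> \<sigma> ` (fn (POut k [w] (PNil :: ('s,'k) proc)) - {k})"
    unfolding k(2) by (rule substa_Abs_single)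
  moreover from this(3) k(1) have "k' \<noteq> \<sigma> w" by auto
  ultimately have "k' \<noteq> \<sigma> w \<and> substa \<sigma> F = Abs [k'] (POut k' [\<sigma> w] PNil)"
    using k(1) by simp
  then show ?thesis unfolding out_abs_def by blast
qed

lemma server_abs_substa:
  fixes F :: "('s,'k) pabs"
  shows "server_abs F \<Longrightarrow> server_abs (substa \<sigma> F)"
proof -
  assume "server_abs F"
  then obtain k y R where k: "k \<noteq> y" "F = Abs [k] (PRes y (POut k [y] R))"
    unfolding server_abs_def by blast
  obtain k' where k': "substa \<sigma> F = Abs [k'] (subst (\<sigma>(k := k')) (PRes y (POut k [y] R)))"
    "fst k' = fst k" "k' \<notin> \<sigma> ` (fn (PRes y (POut k [y] R)) - {k})"
    unfolding k(2) by (rule substa_Abs_single)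
  obtain y' where y': "subst (\<sigma>(k := k')) (PRes y (POut k [y] R))
      = PRes y' (POut ((\<sigma>(k := k')) k) [y'] (subst (\<sigma>(k := k', y := y')) R))"
    "y' \<noteq> (\<sigma>(k := k')) k" "y' \<notin> (\<sigma>(k := k')) ` (fn R - {y})"
    using k(1) by (rule subst_server)
  have "y' \<noteq> k' \<and> substa \<sigma> F = Abs [k'] (PRes y' (POut k' [y'] (subst (\<sigma>(k := k', y := y')) R)))"
    using k'(1) y'(1,2) by simp
  then show ?thesis unfolding server_abs_def by metis
qed

lemma fwd_abs_substa:
  fixes F :: "('s,'k) pabs"
  shows "fwd_abs w F \<Longrightarrow> fwd_abs (\<sigma> w) (substa \<sigma> F)"
proof -
  assume "fwd_abs w F"
  then obtain k y a b where kyab: "distinct [k, y, w]" "distinct [a, b, w]"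
    "F = Abs [k] (PRes y (POut k [y] (PRep y [a, b] (POut w [a, b] PNil))))"
    unfolding fwd_abs_def by blast
  let ?R = "PRep y [a, b] (POut w [a, b] PNil) :: ('s,'k) proc"
  obtain k' where k': "substa \<sigma> F = Abs [k'] (subst (\<sigma>(k := k')) (PRes y (POut k [y] ?R)))"
    "fst k' = fst k" "k' \<notin> \<sigma> ` (fn (PRes y (POut k [y] ?R)) - {k})"
    unfolding kyab(3) by (rule substa_Abs_single)
  have "k \<noteq> y" "a \<noteq> b" "w \<notin> {a, b}" using kyab(1,2) by auto
  obtain y' where y': "subst (\<sigma>(k := k')) (PRes y (POut k [y] ?R))
      = PRes y' (POut ((\<sigma>(k := k')) k) [y'] (subst (\<sigma>(k := k', y := y')) ?R))"
    "y' \<noteq> (\<sigma>(k := k')) k" "y' \<notin> (\<sigma>(k := k')) ` (fn ?R - {y})"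
    by (rule subst_server[OF \<open>k \<noteq> y\<close>])
  obtain a' b' where ab: "subst (\<sigma>(k := k', y := y')) ?R
      = PRep ((\<sigma>(k := k', y := y')) y) [a', b'] (POut ((\<sigma>(k := k', y := y')) w) [a', b'] PNil)"
    "a' \<noteq> b'" "(\<sigma>(k := k', y := y')) w \<notin> {a', b'}"
    by (rule subst_forwarder[OF \<open>a \<noteq> b\<close> \<open>w \<notin> {a, b}\<close>])
  have "distinct [k', y', \<sigma> w]" "distinct [a', b', \<sigma> w]"
    using k'(3) y'(2,3) ab(2,3) kyab(1,2) by auto
  moreover have "substa \<sigma> F = Abs [k'] (PRes y' (POut k' [y'] (PRep y' [a', b'] (POut (\<sigma> w) [a', b'] PNil))))"
    using k'(1) y'(1) ab(1) kyab(1) by auto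
  ultimately show ?thesis unfolding fwd_abs_def by blast
qed

lemma value_abs_substa: "value_abs F \<Longrightarrow> value_abs (substa \<sigma> F)"
  unfolding value_abs_def using out_abs_substa server_abs_substa by blast

lemma out_abs_encV: "v \<noteq> c \<Longrightarrow> out_abs (lvar v x) (encV v c (Var x))"
  by (auto simp: out_abs_def)

lemma value_abs_encV:
  assumes "v \<noteq> c" "is_value V"
  shows "value_abs (encV v c V)"
proof (cases V)
  case (Var n)
  show ?thesis unfolding value_abs_def Var using out_abs_encV[OF assms(1), of n] by blast
qed (use assms in \<open>auto simp: value_abs_def server_abs_def\<close>)

lemma value_abs_encV': "v \<noteq> c \<Longrightarrow> is_value V \<Longrightarrow> value_abs (encV' v c V)"
  by (cases V) (auto simp: value_abs_def server_abs_def)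

lemma fwd_abs_encV': "v \<noteq> c \<Longrightarrow> fwd_abs (lvar v x) (encV' v c (Var x))"
  by (auto simp: fwd_abs_def)

lemma out_abs_emits:
  fixes F :: "('s,'k) pabs"
  assumes "out_abs w F"
  shows "sc \<Delta> (PApp F [k0]) (POut k0 [w] PNil)"
proof -
  obtain k where k: "k \<noteq> w" "F = Abs [k] (POut k [w] PNil)"
    using assms unfolding out_abs_def by blast
  then show ?thesis using sc_beta_single[of \<Delta> k "POut k [w] PNil" k0] by simp
qed

lemma server_abs_emits:
  fixes F :: "('s,'k) pabs"
  assumes "server_abs F" "finite Y"
  shows "\<exists>y R. y \<notin> Y \<and> sc \<Delta> (PApp F [k0]) (PRes y (POut k0 [y] R))"
proof -
  obtain k y R where F: "k \<noteq> y" "F = Abs [k] (PRes y (POut k [y] R))"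
    using assms(1) unfolding server_abs_def by metis
  obtain y1 where y1: "subst (id(k := k0)) (PRes y (POut k [y] R))
      = PRes y1 (POut ((id(k := k0)) k) [y1] (subst (id(k := k0, y := y1)) R))"
    "y1 \<noteq> (id(k := k0)) k" "y1 \<notin> (id(k := k0)) ` (fn R - {y})"
    by (rule subst_server[OF F(1)])
  have "k0 \<noteq> y1" using y1(2) by simp
  then obtain y2 where "y2 \<notin> Y"
    "sc \<Delta> (PRes y1 (POut k0 [y1] (subst (id(k := k0, y := y1)) R)))
      (PRes y2 (POut k0 [y2] (subst (id(y1 := y2)) (subst (id(k := k0, y := y1)) R))))"
    using assms(2) by (rule sc_server_fresh)
  moreover have "sc \<Delta> (PApp F [k0]) (subst (id(k := k0)) (PRes y (POut k [y] R)))"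
    unfolding F(2) by (rule sc_beta_single)
  then have "sc \<Delta> (PApp F [k0]) (PRes y1 (POut k0 [y1] (subst (id(k := k0, y := y1)) R)))"
    unfolding y1(1) by simp
  ultimately show ?thesis by (meson sc_trans)
qed

lemma fwd_abs_emits:
  fixes F :: "('s,'k) pabs"
  assumes "fwd_abs w F" "w \<noteq> k0" "finite Y"
  shows "\<exists>y a b. y \<notin> Y \<and> a \<noteq> b \<and> w \<notin> {a, b} \<and>
    sc \<Delta> (PApp F [k0]) (PRes y (POut k0 [y] (PRep y [a, b] (POut w [a, b] PNil))))"
proof -
  obtain k y a b where kyab0: "distinct [k, y, w]" "distinct [a, b, w]"
    "F = Abs [k] (PRes y (POut k [y] (PRep y [a, b] (POut w [a, b] PNil))))"
    using assms(1) unfolding fwd_abs_def by blast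
  then have kyab: "distinct [k, y, w]" "a \<noteq> b" "w \<notin> {a, b}"
    "F = Abs [k] (PRes y (POut k [y] (PRep y [a, b] (POut w [a, b] PNil))))"
    by auto
  let ?R = "PRep y [a, b] (POut w [a, b] PNil) :: ('s,'k) proc"
  have "k \<noteq> y" using kyab(1) by simp
  obtain y1 where y1: "subst (id(k := k0)) (PRes y (POut k [y] ?R))
      = PRes y1 (POut ((id(k := k0)) k) [y1] (subst (id(k := k0, y := y1)) ?R))"
    "y1 \<noteq> (id(k := k0)) k" "y1 \<notin> (id(k := k0)) ` (fn ?R - {y})"
    by (rule subst_server[OF \<open>k \<noteq> y\<close>])
  obtain a1 b1 where ab1: "subst (id(k := k0, y := y1)) ?R
      = PRep ((id(k := k0, y := y1)) y) [a1, b1] (POut ((id(k := k0, y := y1)) w) [a1, b1] PNil)"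
    "a1 \<noteq> b1" "(id(k := k0, y := y1)) w \<notin> {a1, b1}"
    by (rule subst_forwarder[OF kyab(2,3)])
  let ?R1 = "PRep y1 [a1, b1] (POut w [a1, b1] PNil) :: ('s,'k) proc"
  have "sc \<Delta> (PApp F [k0]) (subst (id(k := k0)) (PRes y (POut k [y] ?R)))"
    unfolding kyab(4) by (rule sc_beta_single)
  then have beta: "sc \<Delta> (PApp F [k0]) (PRes y1 (POut k0 [y1] ?R1))"
    unfolding y1(1) ab1(1) using kyab(1) by auto
  have "w \<noteq> y1" using y1(3) kyab(1,3) by auto
  have "k0 \<noteq> y1" using y1(2) by simp
  then obtain y2 where y2: "y2 \<notin> Y" "sc \<Delta> (PRes y1 (POut k0 [y1] ?R1))
      (PRes y2 (POut k0 [y2] (subst (id(y1 := y2)) ?R1)))"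
    using assms(3) by (rule sc_server_fresh)
  have "w \<notin> {a1, b1}" using ab1(3) kyab(1) by auto
  obtain a2 b2 where ab2: "subst (id(y1 := y2)) ?R1
      = PRep ((id(y1 := y2)) y1) [a2, b2] (POut ((id(y1 := y2)) w) [a2, b2] PNil)"
    "a2 \<noteq> b2" "(id(y1 := y2)) w \<notin> {a2, b2}"
    by (rule subst_forwarder[OF ab1(2) \<open>w \<notin> {a1, b1}\<close>])
  have "subst (id(y1 := y2)) ?R1 = PRep y2 [a2, b2] (POut w [a2, b2] PNil)"
    unfolding ab2(1) using \<open>w \<noteq> y1\<close> by simp
  then have "sc \<Delta> (PApp F [k0]) (PRes y2 (POut k0 [y2] (PRep y2 [a2, b2] (POut w [a2, b2] PNil))))"
    using sc_trans[OF beta y2(2)] by simp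
  moreover have "w \<notin> {a2, b2}" using ab2(3) \<open>w \<noteq> y1\<close> by simp
  ultimately show ?thesis using y2(1) ab2(2) by blast
qed

lemma value_abs_emits:
  fixes F :: "('s,'k) pabs"
  assumes "value_abs F" "finite Y"
  shows "(\<exists>w. sc \<Delta> (PApp F [k0]) (POut k0 [w] PNil)) \<or>
    (\<exists>y R. y \<notin> Y \<and> sc \<Delta> (PApp F [k0]) (PRes y (POut k0 [y] R)))"
  using assms out_abs_emits server_abs_emits unfolding value_abs_def by blast

section \<open>The application of x calls x\<close>

lemma subst_arg_call:
  fixes G :: "('s,'k) pabs"
  assumes "c2 \<noteq> f" "c2 \<noteq> k" "v3 \<noteq> f" "v3 \<noteq> k"
  obtains \<rho> c2' v3' where
    "subst \<sigma> (arg_call G c2 v3 f k) = arg_call (substa \<rho> G) c2' v3' (\<sigma> f) (\<sigma> k)"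
    "fst c2' = fst c2" "c2' \<noteq> \<sigma> f" "c2' \<noteq> \<sigma> k" "v3' \<noteq> \<sigma> f" "v3' \<noteq> \<sigma> k"
proof -
  let ?X = "POut f [v3, k] PNil :: ('s,'k) proc"
  let ?B = "PPar (PApp G [c2]) (PIn c2 [v3] ?X)"
  obtain c2' where c2': "subst \<sigma> (PRes c2 ?B) = PRes c2' (subst (\<sigma>(c2 := c2')) ?B)"
    "fst c2' = fst c2" "c2' \<notin> \<sigma> ` (fn ?B - {c2})"
    by (rule subst_PRes_fresh)
  obtain v3' where v3': "subst (\<sigma>(c2 := c2')) (PIn c2 [v3] ?X)
      = PIn ((\<sigma>(c2 := c2')) c2) [v3'] (subst (\<sigma>(c2 := c2', v3 := v3')) ?X)"
    "fst v3' = fst v3" "v3' \<notin> (\<sigma>(c2 := c2')) ` (fn ?X - {v3})"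
    by (rule subst_PIn_single)
  show ?thesis
  proof (rule that)
    show "subst \<sigma> (arg_call G c2 v3 f k) = arg_call (substa (\<sigma>(c2 := c2')) G) c2' v3' (\<sigma> f) (\<sigma> k)"
      unfolding arg_call_def c2'(1) using v3'(1) assms by simp
  qed (use c2'(2,3) v3'(3) assms in auto)
qed

lemma subst_app_body:
  fixes F G :: "('s,'k) pabs"
  assumes "distinct [c1, v1, c2, v3, k]"
  obtains c1' v1' c2' v3' \<rho> where
    "subst \<sigma> (app_body F G c1 v1 c2 v3 k)
      = app_body (substa (\<sigma>(c1 := c1')) F) (substa \<rho> G) c1' v1' c2' v3' (\<sigma> k)"
    "fst c1' = fst c1" "fst c2' = fst c2" "c1' \<noteq> \<sigma> k" "v1' \<noteq> \<sigma> k"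
    "c2' \<noteq> v1'" "c2' \<noteq> \<sigma> k" "v3' \<noteq> v1'" "v3' \<noteq> \<sigma> k"
proof -
  let ?W = "arg_call G c2 v3 v1 k"
  let ?B = "PPar (PApp F [c1]) (PIn c1 [v1] ?W)"
  obtain c1' where c1': "subst \<sigma> (PRes c1 ?B) = PRes c1' (subst (\<sigma>(c1 := c1')) ?B)"
    "fst c1' = fst c1" "c1' \<notin> \<sigma> ` (fn ?B - {c1})"
    by (rule subst_PRes_fresh)
  obtain v1' where v1': "subst (\<sigma>(c1 := c1')) (PIn c1 [v1] ?W)
      = PIn ((\<sigma>(c1 := c1')) c1) [v1'] (subst (\<sigma>(c1 := c1', v1 := v1')) ?W)"
    "fst v1' = fst v1" "v1' \<notin> (\<sigma>(c1 := c1')) ` (fn ?W - {v1})"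
    by (rule subst_PIn_single)
  have "c2 \<noteq> v1" "c2 \<noteq> k" "v3 \<noteq> v1" "v3 \<noteq> k" using assms by auto
  then obtain \<rho> c2' v3' where W: "subst (\<sigma>(c1 := c1', v1 := v1')) ?W
      = arg_call (substa \<rho> G) c2' v3' ((\<sigma>(c1 := c1', v1 := v1')) v1) ((\<sigma>(c1 := c1', v1 := v1')) k)"
    "fst c2' = fst c2" "c2' \<noteq> (\<sigma>(c1 := c1', v1 := v1')) v1" "c2' \<noteq> (\<sigma>(c1 := c1', v1 := v1')) k"
    "v3' \<noteq> (\<sigma>(c1 := c1', v1 := v1')) v1" "v3' \<noteq> (\<sigma>(c1 := c1', v1 := v1')) k"
    by (rule subst_arg_call)
  have fn_B: "k \<in> fn ?B - {c1}" "k \<in> fn ?W - {v1}"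
    using assms by (auto simp: arg_call_def)
  show ?thesis
  proof (rule that)
    show "subst \<sigma> (app_body F G c1 v1 c2 v3 k)
      = app_body (substa (\<sigma>(c1 := c1')) F) (substa \<rho> G) c1' v1' c2' v3' (\<sigma> k)"
      unfolding app_body_def c1'(1) using v1'(1) W(1) assms by auto
  qed (use c1'(2,3) v1'(3) W(2-6) fn_B assms in force)+
qed

lemma forwarder_calls:
  assumes "a \<noteq> b" "x \<notin> {a, b}"
  shows "\<exists>Q. reaches \<Delta> (PPar (POut y [w, k] PNil) (PRep y [a, b] (POut x [a, b] PNil))) Q
    \<and> has_call Y x k Q"
proof -
  let ?O = "POut y [w, k] PNil" and ?B = "POut x [a, b] PNil"
  have "sc \<Delta> (PPar ?O (PRep y [a, b] ?B)) (PPar (PPar ?O (PIn y [a, b] ?B)) (PRep y [a, b] ?B))"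
    by (meson sc_par_assoc sc_par_right sc_rep_unfold sc_sym sc_trans)
  also have "reaches \<Delta> \<dots> (PPar (PPar (subst (fun_upds id [a, b] [w, k]) ?B) PNil) (PRep y [a, b] ?B))"
    by (rule reaches_par, rule comm_reaches) simp
  finally show ?thesis
    using assms by (auto intro: has_call.intros)
qed

lemma arg_call_reaches:
  fixes G :: "('s,'k) pabs"
  assumes "value_abs G" "v3 \<noteq> f" "v3 \<noteq> k" "c2 \<notin> Y" "finite Y"
  shows "\<exists>E. reaches \<Delta> (arg_call G c2 v3 f k) E \<and> has_call Y f k E"
proof -
  let ?X = "POut f [v3, k] PNil :: ('s,'k) proc"
  have call: "subst (fun_upds id [v3] [w]) ?X = POut f [w, k] PNil" for w
    using assms(2,3) by simp
  have "finite (Y \<union> fn (PIn c2 [v3] ?X))" using assms(5) finite_fn by blast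
  from value_abs_emits[OF assms(1) this, of \<Delta> c2]
  have "\<exists>E. reaches \<Delta> (PPar (PApp G [c2]) (PIn c2 [v3] ?X)) E \<and> has_call Y f k E"
  proof (elim disjE exE conjE)
    fix w assume "sc \<Delta> (PApp G [c2]) (POut c2 [w] PNil)"
    then have "sc \<Delta> (PPar (PApp G [c2]) (PIn c2 [v3] ?X)) (PPar (POut c2 [w] PNil) (PIn c2 [v3] ?X))"
      by (rule sc_par)
    also have "reaches \<Delta> \<dots> (PPar (POut f [w, k] PNil) PNil)"
      using comm_reaches[of "[v3]" "[w]" \<Delta> c2 PNil ?X] unfolding call by simp
    finally show ?thesis by (blast intro: has_call.intros)
  next
    fix y R assume y: "y \<notin> Y \<union> fn (PIn c2 [v3] ?X)"
      and emit: "sc \<Delta> (PApp G [c2]) (PRes y (POut c2 [y] R))"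
    have "sc \<Delta> (PPar (PApp G [c2]) (PIn c2 [v3] ?X)) (PPar (PRes y (POut c2 [y] R)) (PIn c2 [v3] ?X))"
      using emit by (rule sc_par)
    also have "sc \<Delta> \<dots> (PRes y (PPar (POut c2 [y] R) (PIn c2 [v3] ?X)))"
      using y by (intro sc_scope) blast
    also have "reaches \<Delta> \<dots> (PRes y (PPar (POut f [y, k] PNil) R))"
      using comm_reaches[of "[v3]" "[y]" \<Delta> c2 R ?X] unfolding call by (simp add: reaches_res)
    finally show ?thesis using y by (blast intro: has_call.intros)
  qed
  then show ?thesis
    unfolding arg_call_def using assms(4) by (blast intro: reaches_res has_call.intros)
qed

lemma arg_call_subst_reaches:
  fixes G :: "('s,'k) pabs"
  assumes G: "value_abs G"
    and names: "c2 \<noteq> v1" "c2 \<noteq> k" "v3 \<noteq> v1" "v3 \<noteq> k" "v1 \<noteq> k"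
    and Y: "finite Y" "\<forall>n\<in>Y. fst n = fst c2 \<longrightarrow> n = k"
  shows "\<exists>E. reaches \<Delta> (subst (fun_upds id [v1] [w]) (arg_call G c2 v3 v1 k)) E \<and> has_call (insert w Y) w k E"
proof -
  obtain \<rho> c2' v3' where
    "subst (id(v1 := w)) (arg_call G c2 v3 v1 k)
      = arg_call (substa \<rho> G) c2' v3' ((id(v1 := w)) v1) ((id(v1 := w)) k)"
    "fst c2' = fst c2" "c2' \<noteq> (id(v1 := w)) v1" "c2' \<noteq> (id(v1 := w)) k"
    "v3' \<noteq> (id(v1 := w)) v1" "v3' \<noteq> (id(v1 := w)) k"
    by (rule subst_arg_call[OF names(1-4)])
  then have W: "subst (id(v1 := w)) (arg_call G c2 v3 v1 k) = arg_call (substa \<rho> G) c2' v3' w k"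
    "fst c2' = fst c2" "c2' \<noteq> w" "c2' \<noteq> k" "v3' \<noteq> w" "v3' \<noteq> k"
    using names(5) by auto
  have "c2' \<notin> insert w Y" using W(2-4) Y(2) by auto
  then show ?thesis
    unfolding fun_upds_Cons fun_upds_Nil W(1)
    using value_abs_substa[OF G] W(5,6) Y(1) by (intro arg_call_reaches) auto
qed

lemma forwarded_call_reaches:
  assumes "has_call (insert y Y) y k E" "a \<noteq> b" "x \<notin> {a, b}" "x \<in> Y"
  shows "\<exists>Q. reaches \<Delta> (PPar E (PRep y [a, b] (POut x [a, b] PNil))) Q \<and> has_call (insert y Y) x k Q"
proof (rule has_call_reaches[OF assms(1)])
  show "fn (PRep y [a, b] (POut x [a, b] PNil)) \<subseteq> insert y Y" using assms(3,4) by auto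
  show "\<exists>Q. reaches \<Delta> (PPar (POut y [w, k] PNil) (PRep y [a, b] (POut x [a, b] PNil))) Q
      \<and> has_call (insert y Y) x k Q" for w
    by (rule forwarder_calls[OF assms(2,3)])
qed (blast intro: has_call.intros)+

lemma out_answer_reaches:
  assumes "out_abs x F" "x \<in> Y"
    and call: "\<exists>E. reaches \<Delta> (subst (fun_upds id [v1] [x]) W) E \<and> has_call (insert x Y) x k E"
  shows "\<exists>E. reaches \<Delta> (PPar (PApp F [c1]) (PIn c1 [v1] W)) E \<and> has_call Y x k E"
proof -
  have "sc \<Delta> (PPar (PApp F [c1]) (PIn c1 [v1] W)) (PPar (POut c1 [x] PNil) (PIn c1 [v1] W))"
    using assms(1) by (intro sc_par out_abs_emits)
  also have "reaches \<Delta> \<dots> (PPar (subst (fun_upds id [v1] [x]) W) PNil)"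
    by (rule comm_reaches) simp
  finally have to_call: "reaches \<Delta> (PPar (PApp F [c1]) (PIn c1 [v1] W))
    (PPar (subst (fun_upds id [v1] [x]) W) PNil)" .
  obtain E where E: "reaches \<Delta> (subst (fun_upds id [v1] [x]) W) E" "has_call (insert x Y) x k E"
    using call by blast
  have "reaches \<Delta> (PPar (PApp F [c1]) (PIn c1 [v1] W)) (PPar E PNil)"
    using to_call E(1) by (meson reaches_par reaches_trans)
  moreover have "has_call Y x k (PPar E PNil)"
    using E(2) assms(2) by (simp add: insert_absorb has_call_parl)
  ultimately show ?thesis by blast
qed

lemma fwd_answer_reaches:
  fixes F :: "('s,'k) pabs"
  assumes "fwd_abs x F" "x \<noteq> c1" "x \<in> Y" "finite Y"
    and call: "\<And>w. \<exists>E. reaches \<Delta> (subst (fun_upds id [v1] [w]) W) E \<and> has_call (insert w Y) w k E"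
  shows "\<exists>E. reaches \<Delta> (PPar (PApp F [c1]) (PIn c1 [v1] W)) E \<and> has_call Y x k E"
proof -
  have "finite (Y \<union> fn (PIn c1 [v1] W))" using assms(4) finite_fn by blast
  then obtain y a b where y: "y \<notin> Y \<union> fn (PIn c1 [v1] W)" "a \<noteq> b" "x \<notin> {a, b}"
    and emit: "sc \<Delta> (PApp F [c1]) (PRes y (POut c1 [y] (PRep y [a, b] (POut x [a, b] PNil))))"
    using fwd_abs_emits assms(1,2) by blast
  let ?R = "PRep y [a, b] (POut x [a, b] PNil) :: ('s,'k) proc"
  have "sc \<Delta> (PPar (PApp F [c1]) (PIn c1 [v1] W)) (PPar (PRes y (POut c1 [y] ?R)) (PIn c1 [v1] W))"
    using emit by (rule sc_par)
  also have "sc \<Delta> \<dots> (PRes y (PPar (POut c1 [y] ?R) (PIn c1 [v1] W)))"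
    using y(1) by (intro sc_scope) blast
  also have "reaches \<Delta> \<dots> (PRes y (PPar (subst (fun_upds id [v1] [y]) W) ?R))"
    by (rule reaches_res, rule comm_reaches) simp
  finally have to_call: "reaches \<Delta> (PPar (PApp F [c1]) (PIn c1 [v1] W))
    (PRes y (PPar (subst (fun_upds id [v1] [y]) W) ?R))" .
  obtain E where E: "reaches \<Delta> (subst (fun_upds id [v1] [y]) W) E" "has_call (insert y Y) y k E"
    using call by blast
  obtain Q where Q: "reaches \<Delta> (PPar E ?R) Q" "has_call (insert y Y) x k Q"
    using forwarded_call_reaches[OF E(2) y(2,3) assms(3)] by blast
  have "reaches \<Delta> (PPar (PApp F [c1]) (PIn c1 [v1] W)) (PRes y Q)"
    using to_call E(1) Q(1) by (meson reaches_par reaches_res reaches_trans)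
  moreover have "has_call Y x k (PRes y Q)"
    using Q(2) y(1) by (blast intro: has_call.intros has_call_anti_mono)
  ultimately show ?thesis by blast
qed

lemma app_body_reaches:
  fixes F G :: "('s,'k) pabs"
  assumes F: "out_abs x F \<or> fwd_abs x F" and G: "value_abs G"
    and names: "c2 \<noteq> v1" "c2 \<noteq> k" "v3 \<noteq> v1" "v3 \<noteq> k" "v1 \<noteq> k" "x \<noteq> c1"
    and Y: "finite Y" "x \<in> Y" "c1 \<notin> Y" "\<forall>n\<in>Y. fst n = fst c2 \<longrightarrow> n = k"
  shows "\<exists>E. reaches \<Delta> (app_body F G c1 v1 c2 v3 k) E \<and> has_call Y x k E"
proof -
  note call = arg_call_subst_reaches[OF G names(1-5) Y(1,4)]
  have "\<exists>E. reaches \<Delta> (PPar (PApp F [c1]) (PIn c1 [v1] (arg_call G c2 v3 v1 k))) E \<and> has_call Y x k E"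
    using F out_answer_reaches[OF _ Y(2) call] fwd_answer_reaches[OF _ names(6) Y(2,1) call] by blast
  then show ?thesis
    unfolding app_body_def using Y(3) by (blast intro: reaches_res has_call.intros)
qed

lemma app_var_reaches_call:
  fixes X A :: "('s,'k) pabs"
  assumes "v \<noteq> c" "out_abs (lvar v x) X \<or> fwd_abs (lvar v x) X" "value_abs A"
  shows "\<exists>E. reaches \<Delta> (PApp (Abs [(c,0)] (app_body X A (c,1) (v,1) (c,2) (v,3) (c,0))) [(c,0)]) E
    \<and> has_call {lvar v x, lvar v (Suc x), (c,0)} (lvar v x) (c,0) E"
proof -
  let ?P = "app_body X A (c,1) (v,1) (c,2) (v,3) (c,0)"
  have "distinct [(c,1), (v,1), (c,2), (v,3), (c,0::nat)]" using assms(1) by auto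
  then obtain c1 v1 c2 v3 \<rho> where P:
    "subst id ?P = app_body (substa (id((c,1) := c1)) X) (substa \<rho> A) c1 v1 c2 v3 (id (c,0))"
    "fst c1 = fst (c, 1::nat)" "fst c2 = fst (c, 2::nat)" "c1 \<noteq> id (c,0)" "v1 \<noteq> id (c,0)"
    "c2 \<noteq> v1" "c2 \<noteq> id (c,0)" "v3 \<noteq> v1" "v3 \<noteq> id (c,0)"
    by (rule subst_app_body)
  have "id((c,0) := (c, 0::nat)) = id" by auto
  then have "sc \<Delta> (PApp (Abs [(c,0)] ?P) [(c,0)]) (subst id ?P)"
    using sc_beta_single[of \<Delta> "(c,0)" ?P "(c,0)"] by (simp only:)
  also have "subst id ?P = app_body (substa (id((c,1) := c1)) X) (substa \<rho> A) c1 v1 c2 v3 (c,0)"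
    using P(1) by simp
  finally have beta: "sc \<Delta> (PApp (Abs [(c,0)] ?P) [(c,0)])
    (app_body (substa (id((c,1) := c1)) X) (substa \<rho> A) c1 v1 c2 v3 (c,0))" .
  have c1_lvar: "lvar v m \<noteq> c1" "c1 \<noteq> lvar v m" for m
    using P(2) assms(1) by (metis fst_conv fst_lvar)+
  have "\<exists>E. reaches \<Delta> (app_body (substa (id((c,1) := c1)) X) (substa \<rho> A) c1 v1 c2 v3 (c,0)) E
      \<and> has_call {lvar v x, lvar v (Suc x), (c,0)} (lvar v x) (c,0) E"
  proof (rule app_body_reaches)
    have "(id((c,1) := c1)) (lvar v x) = lvar v x" using assms(1) by simp
    then show "out_abs (lvar v x) (substa (id((c,1) := c1)) X) \<or> fwd_abs (lvar v x) (substa (id((c,1) := c1)) X)"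
      using assms(2) out_abs_substa[of "lvar v x" X "id((c,1) := c1)"]
        fwd_abs_substa[of "lvar v x" X "id((c,1) := c1)"] by argo
  qed (use assms(1) P(2-9) value_abs_substa[OF assms(3)] c1_lvar in simp_all)
  then show ?thesis using beta by (blast intro: sc_reaches_trans)
qed

lemma observer_answers:
  fixes \<Delta> :: "('s,'k) defs" and v c :: 's
  assumes "v \<noteq> c"
  shows "\<exists>Q. reaches \<Delta> (PPar (POut (lvar v x) [w, (c,0)] PNil) (observer v c x)) Q
    \<and> obs (lvar v (Suc x)) Q"
proof -
  let ?ok = "lvar v (Suc x)"
  let ?report = "POut ?ok [(v,1), (c,0)] PNil :: ('s,'k) proc"
  define \<sigma> where "\<sigma> = fun_upds id [(v,1), (c,1)] [w, (c,0)]"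
  obtain b where b: "subst \<sigma> (PIn (c,1) [(v,1)] ?report) = PIn (\<sigma> (c,1)) [b] (subst (\<sigma>((v,1) := b)) ?report)"
    "b \<notin> \<sigma> ` (fn ?report - {(v,1)})"
    by (rule subst_PIn_single)
  have \<sigma>: "\<sigma> (c,1) = (c,0)" "\<sigma> ?ok = ?ok" "\<sigma> (c,0) = (c,0)"
    using assms by (auto simp: \<sigma>_def)
  then have b_fresh: "b \<noteq> ?ok" "b \<noteq> (c,0)" using b(2) by force+
  have call: "subst \<sigma> (PIn (c,1) [(v,1)] ?report) = PIn (c,0) [b] (POut ?ok [b, (c,0)] PNil)"
    unfolding b(1) using \<sigma> assms by simp
  have "sc \<Delta> (PPar (POut (lvar v x) [w, (c,0)] PNil) (observer v c x))
      (PPar (PPar (POut (lvar v x) [w, (c,0)] PNil) (PIn (lvar v x) [(v,1), (c,1)] (PIn (c,1) [(v,1)] ?report)))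
        (POut (c,0) [lvar v x] PNil))"
    unfolding observer_def by (rule sc_sym, rule sc_par_assoc)
  also have "reaches \<Delta> \<dots> (PPar (PPar (PIn (c,0) [b] (POut ?ok [b, (c,0)] PNil)) PNil) (POut (c,0) [lvar v x] PNil))"
    unfolding call[symmetric] \<sigma>_def by (rule reaches_par, rule comm_reaches) simp
  also have "sc \<Delta> \<dots> (PPar (POut (c,0) [lvar v x] PNil) (PIn (c,0) [b] (POut ?ok [b, (c,0)] PNil)))"
    by (meson sc_par sc_par_comm sc_par_nil sc_trans)
  also have "reaches \<Delta> \<dots> (PPar (POut ?ok [lvar v x, (c,0)] PNil) PNil)"
    using comm_reaches[of "[b]" "[lvar v x]" \<Delta> "(c,0)" PNil "POut ?ok [b, (c,0)] PNil"] b_fresh by simp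
  finally show ?thesis by auto
qed

lemma observer_reports:
  fixes \<Delta> :: "('s,'k) defs"
  assumes "v \<noteq> c" "reaches \<Delta> P E" "has_call {lvar v x, lvar v (Suc x), (c,0)} (lvar v x) (c,0) E"
  shows "wbarb \<Delta> (PPar P (observer v c x)) (lvar v (Suc x))"
proof -
  have "\<exists>Q. reaches \<Delta> (PPar E (observer v c x)) Q \<and> obs (lvar v (Suc x)) Q"
  proof (rule has_call_reaches[OF assms(3)])
    show "\<exists>Q. reaches \<Delta> (PPar (POut (lvar v x) [w, (c,0)] PNil) (observer v c x)) Q
        \<and> obs (lvar v (Suc x)) Q" for w
      by (rule observer_answers[OF assms(1)])
  qed (auto simp: observer_def)
  then show ?thesis using reaches_par[OF assms(2)] by (meson reaches_trans reaches_wbarb)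
qed

lemma encV_app_var_observed:
  assumes "v \<noteq> c" "is_value V"
  shows "wbarb \<Delta> (PPar (PApp (encV v c (LApp (Var x) V)) [(c,0)]) (observer v c x)) (lvar v (Suc x))"
proof -
  obtain E where "reaches \<Delta> (PApp (encV v c (LApp (Var x) V)) [(c,0)]) E"
      "has_call {lvar v x, lvar v (Suc x), (c,0)} (lvar v x) (c,0) E"
    using app_var_reaches_call[OF assms(1) _ value_abs_encV[OF assms]] out_abs_encV[OF assms(1)]
    unfolding encV_LApp by blast
  then show ?thesis by (rule observer_reports[OF assms(1)])
qed

lemma encV'_app_var_observed:
  assumes "v \<noteq> c" "is_value V"
  shows "wbarb \<Delta> (PPar (PApp (encV' v c (LApp (Var x) V)) [(c,0)]) (observer v c x)) (lvar v (Suc x))"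
proof -
  obtain E where "reaches \<Delta> (PApp (encV' v c (LApp (Var x) V)) [(c,0)]) E"
      "has_call {lvar v x, lvar v (Suc x), (c,0)} (lvar v x) (c,0) E"
    using app_var_reaches_call[OF assms(1) _ value_abs_encV'[OF assms]] fwd_abs_encV'[OF assms(1)]
    unfolding encV'_LApp by blast
  then show ?thesis by (rule observer_reports[OF assms(1)])
qed

lemma not_bcong_by_observer:
  assumes "v \<noteq> c" "ob v = [v, c]" "ob c = [v]" "asort \<Delta> A = [c]"
    and "wbarb \<Delta> (PPar (PApp B [(c,0)]) (observer v c x)) (lvar v (Suc x))"
    and "\<not> wbarb \<Delta> (PPar (PApp A [(c,0)]) (observer v c x)) (lvar v (Suc x))"
  shows "\<not> bcong ob \<Delta> A B"
proof
  let ?C = "PPar (Hole [(c,0)]) (observer v c x)"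
  assume "bcong ob \<Delta> A B"
  moreover have "ws ob \<Delta> (asort \<Delta> A) ?C" "nholes ?C = 1"
    using assms(1-4) by (simp_all add: observer_def)
  ultimately have "bbisimilar \<Delta> (fill ?C A) (fill ?C B)" unfolding bcong_def by blast
  then have "wbarb \<Delta> (fill ?C A) (lvar v (Suc x)) \<longleftrightarrow> wbarb \<Delta> (fill ?C B) (lvar v (Suc x))"
    unfolding bbisimilar_def is_bbisim_def by blast
  then show False using assms(5,6) by (simp add: observer_def)
qed

theorem proposition3p1:
  fixes ob :: "'s \<Rightarrow> 's list" and v c :: 's and \<Delta> :: "('s,'k) defs"
    and V :: lterm and x z :: nat
  assumes "v \<noteq> c" and "ob v = [v, c]" and "ob c = [v]" and "wf_defs ob \<Delta>"
    and "is_value V"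
  shows "\<not> bcong ob \<Delta> (encV' v c (LApp (Lam z (Var z)) (LApp (Var x) V))) (encV' v c (LApp (Var x) V))
       \<and> \<not> bcong ob \<Delta> (encV v c (LApp (Lam z (Var z)) (LApp (Var x) V))) (encV v c (LApp (Var x) V))"
proof
  show "\<not> bcong ob \<Delta> (encV' v c (LApp (Lam z (Var z)) (LApp (Var x) V))) (encV' v c (LApp (Var x) V))"
    using not_bcong_by_observer[OF assms(1-3) _ encV'_app_var_observed[OF assms(1,5)]
        observer_silent[OF assms(4,1) typed_encV'_app_identity[OF assms(1,5)]]]
    by simp
  show "\<not> bcong ob \<Delta> (encV v c (LApp (Lam z (Var z)) (LApp (Var x) V))) (encV v c (LApp (Var x) V))"
    using not_bcong_by_observer[OF assms(1-3) _ encV_app_var_observed[OF assms(1,5)]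
        observer_silent[OF assms(4,1) typed_encV_app_identity[OF assms(1,5)]]]
    by simp
qed

end
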